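(* Consider the FlexGT/Acc-FlexGT recursion in the context, and suppose (S), (V), (G) hold. If $$\gamma\le\min\left\{\frac{1}{4\beta L},\frac{1-\bar\rho_W}{14\beta L\sqrt{\bar\rho_W}}\right\},$$ then for all $K\ge1$, $$\frac1K\sum_{k=0}^{K-1}\mathbb{E}\|\tilde{\mathbf y}_{\beta k}\|^2\le\frac{4\mathbb{E}\|\tilde{\mathbf y}_0\|^2}{(1-\bar\rho_W)K}+\frac{24n\sigma^2}{1-\bar\rho_W}+\frac{96\bar\rho_WL^2}{(1-\bar\rho_W)^2}\frac1K\sum_{k=0}^{K-1}\mathbb{E}\|\tilde{\mathbf x}_{\beta k}\|^2+\frac{384n\gamma^2\beta^2L^2\bar\rho_W}{(1-\bar\rho_W)^2}\frac1K\sum_{k=0}^{K-1}\mathbb{E}\|\nabla f(\bar x_{\beta k})\|^2 .$$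
   Context: Problem: $n$ nodes, each with $f_i(x)=\mathbb{E}_{\xi_i\sim\mathcal D_i}[f_i(x;\xi_i)]$ on $\mathbb{R}^p$, $f=\frac1n\sum_i f_i$. Stochastic oracle: unbiased $\nabla f_i(x;\xi_i)$, independent samples across nodes and iterations. Assumptions: (S) each $f_i$ has $L$-Lipschitz gradient. (V) $\mathbb{E}\|\nabla f_i(x;\xi_i)-\nabla f_i(x)\|^2\le\sigma^2$. (G) $W$ doubly stochastic, $\rho_W:=\|W-\mathbf J\|_2^2<1$, $\mathbf J=\mathbf 1\mathbf 1^\top/n$. Algorithm: integers $\alpha,\beta\ge1$, stepsize $\gamma>0$; $\bar W=W^\alpha$ (FlexGT) or $\bar W=M_\alpha$ (Acc-FlexGT) with $M_{-1}=M_0=I$, $M_{s+1}=(1+\eta)WM_s-\eta M_{s-1}$, $\eta=\frac{1-\sqrt{1-\rho_W}}{1+\sqrt{1-\rho_W}}$; $\bar\rho_W:=\|\bar W-\mathbf J\|_2^2$ (spectral norm), assumed $<1$. Iterates $\mathbf x_t,\mathbf y_t\in\mathbb{R}^{n\times p}$; snapshot $\mathbf z_t=\mathbf x_{\beta\lfloor t/\beta\rfloor}$; $\nabla G_t$ has rows $\nabla f_i(z_{i,t};\xi_{i,t})$ with fresh samples. $\mathbf y_0=\nabla G_0$. For round $k\ge0$, $j=0,\dots,\beta-2$: $\mathbf x_{\beta k+j+1}=\mathbf x_{\beta k+j}-\gamma\mathbf y_{\beta k+j}$, $\mathbf y_{\beta k+j+1}=\mathbf y_{\beta k+j}+\nabla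 G_{\beta k+j+1}-\nabla G_{\beta k+j}$; round end: $\mathbf x_{\beta(k+1)}=\bar W(\mathbf x_{\beta k}-\gamma\sum_{j=0}^{\beta-1}\mathbf y_{\beta k+j})$, then $\mathbf y_{\beta(k+1)}=\bar W(\mathbf y_{\beta k}+\nabla G_{\beta(k+1)}-\nabla G_{\beta k})$. Notation: $\|\cdot\|$ Euclidean/Frobenius; $\bar x_t=\mathbf 1^\top\mathbf x_t/n$, $\tilde{\mathbf x}_t=\mathbf x_t-\mathbf 1\bar x_t$, $\bar y_t=\mathbf 1^\top\mathbf y_t/n$, $\tilde{\mathbf y}_t=\mathbf y_t-\mathbf 1\bar y_t$. *)

theory Defs
  imports "HOL-Probability.Probability"
begin

text \<open>Stacked iterates are elements of 'a ^ 'n: row i is the local vector of node i.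
The norm on 'a ^ 'n is sqrt of the sum of squared row norms, i.e. the Frobenius norm.\<close>

definition mix :: "real^'n^'n \<Rightarrow> 'a::real_vector^'n \<Rightarrow> 'a^'n" where
  "mix A X = (\<chi> i. \<Sum>j\<in>UNIV. (A$i$j) *\<^sub>R (X$j))"

definition Jmat :: "real^'n::finite^'n" where
  "Jmat = (\<chi> i j. 1 / real CARD('n))"

definition doubly_stochastic :: "real^'n::finite^'n \<Rightarrow> bool" where
  "doubly_stochastic W \<longleftrightarrow> (\<forall>i j. W$i$j \<ge> 0) \<and> (\<forall>i. (\<Sum>j\<in>UNIV. W$i$j) = 1)
      \<and> (\<forall>j. (\<Sum>i\<in>UNIV. W$i$j) = 1)"

definition rho_of :: "real^'n::finite^'n \<Rightarrow> real" where
  "rho_of A = (onorm (\<lambda>v::real^'n. (A - Jmat) *v v))\<^sup>2"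

fun mpow :: "real^'n::finite^'n \<Rightarrow> nat \<Rightarrow> real^'n^'n" where
  "mpow W 0 = mat 1"
| "mpow W (Suc k) = W ** mpow W k"

text \<open>Chebyshev-type acceleration: M_{-1} = M_0 = I, M_{s+1} = (1+eta) W M_s - eta M_{s-1}.\<close>
fun accM :: "real \<Rightarrow> real^'n::finite^'n \<Rightarrow> nat \<Rightarrow> real^'n^'n" where
  "accM eta W 0 = mat 1"
| "accM eta W (Suc 0) = (1 + eta) *\<^sub>R (W ** mat 1) - eta *\<^sub>R mat 1"
| "accM eta W (Suc (Suc s)) = (1 + eta) *\<^sub>R (W ** accM eta W (Suc s)) - eta *\<^sub>R accM eta W s"

definition eta_of :: "real \<Rightarrow> real" where
  "eta_of rho = (1 - sqrt (1 - rho)) / (1 + sqrt (1 - rho))"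

text \<open>The mixing matrix of FlexGT (acc = False) or Acc-FlexGT (acc = True).\<close>
definition Wbar :: "bool \<Rightarrow> real^'n::finite^'n \<Rightarrow> nat \<Rightarrow> real^'n^'n" where
  "Wbar acc W \<alpha> = (if acc then accM (eta_of (rho_of W)) W \<alpha> else mpow W \<alpha>)"

definition avg :: "'a::real_vector^'n::finite \<Rightarrow> 'a" where
  "avg X = (1 / real CARD('n)) *\<^sub>R (\<Sum>i\<in>UNIV. X$i)"

definition dev :: "'a::real_vector^'n::finite \<Rightarrow> 'a^'n" where
  "dev X = (\<chi> i. X$i - avg X)"

definition sgrad :: "('n \<Rightarrow> 'a \<Rightarrow> 's \<Rightarrow> 'a) \<Rightarrow> ('n \<Rightarrow> nat \<Rightarrow> 'w \<Rightarrow> 's)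
    \<Rightarrow> 'w \<Rightarrow> nat \<Rightarrow> 'a^'n::finite \<Rightarrow> 'a^'n" where
  "sgrad G xi w t Z = (\<chi> i. G i (Z$i) (xi i t w))"

text \<open>Inner (local) steps of round k, starting from (x_{beta k}, y_{beta k}) = (Xk, Yk);
  inner ... j = (x_{beta k + j}, y_{beta k + j}) for j < beta. The snapshot is Xk.\<close>
fun inner :: "('n \<Rightarrow> 'a::real_vector \<Rightarrow> 's \<Rightarrow> 'a) \<Rightarrow> ('n \<Rightarrow> nat \<Rightarrow> 'w \<Rightarrow> 's) \<Rightarrow> 'w
    \<Rightarrow> real \<Rightarrow> nat \<Rightarrow> nat \<Rightarrow> 'a^'n::finite \<Rightarrow> 'a^'n \<Rightarrow> nat \<Rightarrow> ('a^'n) \<times> ('a^'n)" where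
  "inner G xi w \<gamma> \<beta> k Xk Yk 0 = (Xk, Yk)"
| "inner G xi w \<gamma> \<beta> k Xk Yk (Suc j) =
     (let (X, Y) = inner G xi w \<gamma> \<beta> k Xk Yk j in
       (X - \<gamma> *\<^sub>R Y,
        Y + sgrad G xi w (\<beta> * k + j + 1) Xk - sgrad G xi w (\<beta> * k + j) Xk))"

text \<open>Round-level recursion: rounds ... k w = (x_{beta k}, y_{beta k}) at sample point w.\<close>
fun rounds :: "real^'n::finite^'n \<Rightarrow> ('n \<Rightarrow> 'a::real_vector \<Rightarrow> 's \<Rightarrow> 'a) \<Rightarrow> ('n \<Rightarrow> nat \<Rightarrow> 'w \<Rightarrow> 's)
    \<Rightarrow> real \<Rightarrow> nat \<Rightarrow> 'a^'n \<Rightarrow> nat \<Rightarrow> 'w \<Rightarrow> ('a^'n) \<times> ('a^'n)" where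
  "rounds Wb G xi \<gamma> \<beta> x0 0 w = (x0, sgrad G xi w 0 x0)"
| "rounds Wb G xi \<gamma> \<beta> x0 (Suc k) w =
     (let (Xk, Yk) = rounds Wb G xi \<gamma> \<beta> x0 k w;
          X' = mix Wb (Xk - \<gamma> *\<^sub>R (\<Sum>j<\<beta>. snd (inner G xi w \<gamma> \<beta> k Xk Yk j)))
      in (X', mix Wb (Yk + sgrad G xi w (\<beta> * (k + 1)) X' - sgrad G xi w (\<beta> * k) Xk)))"

definition flexgt :: "real^'n::finite^'n \<Rightarrow> ('n \<Rightarrow> 'a::real_vector \<Rightarrow> 's \<Rightarrow> 'a) \<Rightarrow> ('n \<Rightarrow> nat \<Rightarrow> 'w \<Rightarrow> 's)
    \<Rightarrow> real \<Rightarrow> nat \<Rightarrow> 'a^'n \<Rightarrow> nat \<Rightarrow> 'w \<Rightarrow> ('a^'n) \<times> ('a^'n)" where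
  "flexgt Wb G xi \<gamma> \<beta> x0 t w =
     (let k = t div \<beta>; (Xk, Yk) = rounds Wb G xi \<gamma> \<beta> x0 k w
      in inner G xi w \<gamma> \<beta> k Xk Yk (t mod \<beta>))"

end

theory Submission
  imports Defs
begin

text \<open>Let \<open>v\<^sub>k\<close> be the tracker \<open>y\<^sub>\<beta>\<^sub>k\<close> with the noise of the gradient sample drawn at time
  \<open>\<beta>k\<close> removed. One round gives \<open>dev y\<^sub>k\<^sub>+\<^sub>1 = A\<^sub>k + (W - J) e\<close> and
  \<open>dev v\<^sub>k\<^sub>+\<^sub>1 = A\<^sub>k + (W - I) e\<close>, where \<open>A\<^sub>k\<close> is \<open>W\<close> applied to the consensus error of
  \<open>v\<^sub>k\<close> plus the gradient increment over the round, and \<open>e\<close> is the fresh noise at time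
  \<open>\<beta>(k+1)\<close>. As \<open>A\<^sub>k\<close> only depends on earlier samples and the fresh noise has conditional mean
  zero, the cross terms vanish in expectation. The contraction of \<open>W - J\<close>, Young's inequality and
  the step size conditions bound \<open>E|A\<^sub>k|\<^sup>2\<close> by \<open>(3 + \<rho>)/4 E|dev v\<^sub>k|\<^sup>2\<close> plus the consensus
  error of \<open>x\<close>, the gradient at the average and the noise. Summing the two coupled recursions over
  the rounds gives the bound.\<close>

lemma power2_norm_add_le:
  "(norm (a + b))\<^sup>2 \<le> 2 * (norm a)\<^sup>2 + 2 * (norm (b :: 'a::real_normed_vector))\<^sup>2"
proof -
  have "(norm (a + b))\<^sup>2 \<le> (norm a + norm b)\<^sup>2"
    by (simp add: norm_triangle_ineq power_mono)
  also have "\<dots> \<le> 2 * (norm a)\<^sup>2 + 2 * (norm b)\<^sup>2"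
    using zero_le_power2[of "norm a - norm b"] by (simp add: power2_sum power2_diff)
  finally show ?thesis .
qed

lemma power2_norm_diff_le:
  "(norm (a - b))\<^sup>2 \<le> 2 * (norm a)\<^sup>2 + 2 * (norm (b :: 'a::real_normed_vector))\<^sup>2"
  using power2_norm_add_le[of a "- b"] by simp

lemma power2_norm_sum_le:
  "(norm (\<Sum>j\<in>A. u j))\<^sup>2 \<le> real (card A) * (\<Sum>j\<in>A. (norm (u j :: 'a::real_normed_vector))\<^sup>2)"
proof -
  have "(norm (\<Sum>j\<in>A. u j))\<^sup>2 \<le> (\<Sum>j\<in>A. norm (u j))\<^sup>2"
    by (intro power_mono norm_sum) auto
  also have "\<dots> \<le> (\<Sum>j\<in>A. (norm (u j))\<^sup>2) * real (card A)"
    by (rule sum_squared_le_sum_of_squares)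
  finally show ?thesis by (simp add: mult.commute)
qed

text \<open>Young's inequality, weighted so that the factor \<open>r\<close> becomes \<open>(1 + r) / 2\<close>.\<close>

lemma contraction_power2_add_le:
  fixes r p q :: real
  assumes "0 \<le> r" "r < 1"
  shows "r * (p + q)\<^sup>2 \<le> (1 + r) / 2 * p\<^sup>2 + 2 * r / (1 - r) * q\<^sup>2"
proof -
  have "2 * (1 - r) * ((1 + r) / 2 * p\<^sup>2 + 2 * r / (1 - r) * q\<^sup>2 - r * (p + q)\<^sup>2)
      = ((1 - r) * p - 2 * r * q)\<^sup>2 + 2 * r * (1 - r) * q\<^sup>2"
    using assms by (simp add: field_simps power2_eq_square)
  also have "\<dots> \<ge> 0"
    using assms by simp
  finally show ?thesis
    using assms by (simp add: zero_le_mult_iff)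
qed

definition rows_sum_one :: "real^'n::finite^'n \<Rightarrow> bool" where
  "rows_sum_one C \<longleftrightarrow> (\<forall>i. (\<Sum>j\<in>UNIV. C$i$j) = 1)"

definition cols_sum_one :: "real^'n::finite^'n \<Rightarrow> bool" where
  "cols_sum_one C \<longleftrightarrow> (\<forall>j. (\<Sum>i\<in>UNIV. C$i$j) = 1)"

lemma mix_add: "mix C (X + Y) = mix C X + mix C Y"
  by (simp add: mix_def vec_eq_iff scaleR_add_right sum.distrib)

lemma mix_diff: "mix C (X - Y) = mix C X - mix C Y"
  by (simp add: mix_def vec_eq_iff scaleR_diff_right sum_subtractf)

lemma mix_scaleR: "mix C (a *\<^sub>R X) = a *\<^sub>R mix C X"
  by (simp add: mix_def vec_eq_iff scaleR_sum_right mult.commute)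

lemma mix_matrix_diff: "mix (A - B) X = mix A X - mix B X"
  by (simp add: mix_def vec_eq_iff scaleR_diff_left sum_subtractf)

lemma mix_mat_1: "mix (mat 1) X = X"
proof -
  have "(\<Sum>j\<in>UNIV. (mat 1 $ i $ j) *\<^sub>R X$j) = X$i" for i
    by (simp add: mat_def if_distrib[of "\<lambda>c. c *\<^sub>R _"] cong: if_cong)
  then show ?thesis
    by (simp add: mix_def vec_eq_iff)
qed

lemma mix_Jmat: "mix Jmat X = vec (avg X)"
  by (simp add: mix_def Jmat_def vec_def avg_def vec_eq_iff scaleR_sum_right)

lemma mix_vec: "rows_sum_one C \<Longrightarrow> mix C (vec c) = vec c"
  by (simp add: mix_def vec_def rows_sum_one_def vec_eq_iff flip: scaleR_sum_left)

lemma avg_add: "avg (X + Y) = avg X + avg Y"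
  by (simp add: avg_def sum.distrib scaleR_add_right)

lemma avg_diff: "avg (X - Y) = avg X - avg Y"
  by (simp add: avg_def sum_subtractf scaleR_diff_right)

lemma avg_vec: "avg (vec c :: 'a::real_vector^'n::finite) = c"
  by (simp add: avg_def vec_def sum_constant_scaleR)

lemma avg_mix:
  assumes "cols_sum_one C"
  shows "avg (mix C X) = avg X"
proof -
  have "(\<Sum>i\<in>UNIV. (mix C X)$i) = (\<Sum>j\<in>UNIV. \<Sum>i\<in>UNIV. C$i$j *\<^sub>R X$j)"
    unfolding mix_def by (simp add: sum.swap[of "\<lambda>i j. C$i$j *\<^sub>R X$j"])
  also have "\<dots> = (\<Sum>j\<in>UNIV. X$j)"
    using assms by (simp add: cols_sum_one_def flip: scaleR_sum_left)
  finally show ?thesis by (simp add: avg_def)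
qed

lemma dev_eq: "dev X = X - vec (avg X)"
  by (simp add: dev_def vec_def vec_eq_iff)

lemma avg_dev: "avg (dev X :: 'a::real_vector^'n::finite) = 0"
  by (simp add: dev_eq avg_diff avg_vec)

lemma dev_add: "dev (X + Y) = dev X + dev Y"
  by (simp add: dev_def vec_eq_iff avg_add)

lemma dev_diff: "dev (X - Y) = dev X - dev Y"
  by (simp add: dev_def vec_eq_iff avg_diff)

lemma dev_eq_mix: "dev X = mix (mat 1 - Jmat) X"
  by (simp add: mix_matrix_diff mix_mat_1 mix_Jmat dev_eq)

lemma mix_dev: "rows_sum_one C \<Longrightarrow> mix C (dev X) = mix (C - Jmat) X"
  by (simp add: dev_eq mix_diff mix_vec mix_matrix_diff mix_Jmat)

lemma dev_mix: "rows_sum_one C \<Longrightarrow> cols_sum_one C \<Longrightarrow> dev (mix C X) = mix C (dev X)"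
  by (simp add: dev_eq avg_mix mix_diff mix_vec)

lemma inner_mix_transpose:
  fixes H E :: "'a::real_inner^'n::finite"
  shows "H \<bullet> mix C E = (\<Sum>i\<in>UNIV. (mix (transpose C) H)$i \<bullet> E$i)"
proof -
  have "H \<bullet> mix C E = (\<Sum>m\<in>UNIV. \<Sum>i\<in>UNIV. C$m$i * (H$m \<bullet> E$i))"
    by (simp add: inner_vec_def mix_def inner_sum_right)
  also have "\<dots> = (\<Sum>i\<in>UNIV. \<Sum>m\<in>UNIV. C$m$i * (H$m \<bullet> E$i))"
    by (rule sum.swap)
  also have "\<dots> = (\<Sum>i\<in>UNIV. (mix (transpose C) H)$i \<bullet> E$i)"
    by (simp add: mix_def transpose_def inner_sum_left)
  finally show ?thesis .
qed

lemma power2_norm_vec: "(norm (X :: 'a::real_normed_vector^'n::finite))\<^sup>2 = (\<Sum>i\<in>UNIV. (norm (X$i))\<^sup>2)"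
  by (simp add: norm_vec_def L2_set_def sum_nonneg)

lemma power2_norm_avg_dev:
  "(norm (X :: 'a::real_inner^'n::finite))\<^sup>2 = real CARD('n) * (norm (avg X))\<^sup>2 + (norm (dev X))\<^sup>2"
proof -
  let ?a = "avg X"
  have sum_X: "(\<Sum>i\<in>UNIV. X$i) = real CARD('n) *\<^sub>R ?a"
    by (simp add: avg_def)
  have "(norm (dev X))\<^sup>2 = (\<Sum>i\<in>UNIV. (norm (X$i))\<^sup>2 - 2 * (X$i \<bullet> ?a) + (norm ?a)\<^sup>2)"
    unfolding power2_norm_vec dev_def
    by (intro sum.cong refl)
       (simp add: power2_norm_eq_inner inner_diff_left inner_diff_right inner_commute)
  also have "\<dots> = (norm X)\<^sup>2 - 2 * ((\<Sum>i\<in>UNIV. X$i) \<bullet> ?a) + real CARD('n) * (norm ?a)\<^sup>2"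
    by (simp add: sum.distrib sum_subtractf inner_sum_left sum_distrib_left power2_norm_vec)
  finally show ?thesis
    by (simp add: sum_X power2_norm_eq_inner)
qed

lemma power2_norm_dev_le: "(norm (dev (X :: 'a::real_inner^'n::finite)))\<^sup>2 \<le> (norm X)\<^sup>2"
  by (simp add: power2_norm_avg_dev[of X])

lemma power2_norm_mix_le:
  fixes X :: "'a::euclidean_space^'n::finite"
  shows "(norm (mix C X))\<^sup>2 \<le> (onorm ((*v) C))\<^sup>2 * (norm X)\<^sup>2"
proof -
  define z where "z b = (\<chi> j. X$j \<bullet> b)" for b
  have power2_norm_euclidean: "(norm x)\<^sup>2 = (\<Sum>b\<in>Basis. (x \<bullet> b)\<^sup>2)" for x :: 'a
    unfolding power2_norm_eq_inner by (subst euclidean_inner) (simp add: power2_eq_square)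
  have "(norm (mix C X))\<^sup>2 = (\<Sum>i\<in>UNIV. \<Sum>b\<in>Basis. ((C *v z b)$i)\<^sup>2)"
    by (simp add: power2_norm_vec power2_norm_euclidean mix_def z_def matrix_vector_mult_def
        inner_sum_left)
  also have "\<dots> = (\<Sum>b\<in>Basis. (norm (C *v z b))\<^sup>2)"
    by (subst sum.swap) (simp add: power2_norm_vec)
  also have "\<dots> \<le> (\<Sum>b\<in>Basis. (onorm ((*v) C))\<^sup>2 * (norm (z b))\<^sup>2)"
  proof (intro sum_mono)
    fix b :: 'a
    have "norm (C *v z b) \<le> onorm ((*v) C) * norm (z b)"
      using onorm[OF matrix_vector_mul_bounded_linear[of C]] by simp
    then show "(norm (C *v z b))\<^sup>2 \<le> (onorm ((*v) C))\<^sup>2 * (norm (z b))\<^sup>2"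
      by (metis norm_ge_zero power_mono power_mult_distrib)
  qed
  also have "\<dots> = (onorm ((*v) C))\<^sup>2 * (\<Sum>b\<in>Basis. \<Sum>j\<in>UNIV. (X$j \<bullet> b)\<^sup>2)"
    by (simp add: sum_distrib_left power2_norm_vec z_def)
  also have "\<dots> = (onorm ((*v) C))\<^sup>2 * (norm X)\<^sup>2"
    by (subst sum.swap) (simp add: power2_norm_vec power2_norm_euclidean)
  finally show ?thesis .
qed

lemma rho_of_nonneg: "0 \<le> rho_of C"
  by (simp add: rho_of_def)

lemma power2_norm_mix_dev_le:
  fixes X :: "'a::euclidean_space^'n::finite"
  shows "(norm (mix C (dev X)))\<^sup>2 \<le> rho_of C * (norm (dev X))\<^sup>2"
proof -
  have "mix C (dev X) = mix (C - Jmat) (dev X)"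
    by (simp add: mix_matrix_diff mix_Jmat avg_dev vec_def zero_vec_def)
  then show ?thesis
    using power2_norm_mix_le[of "C - Jmat" "dev X"] by (simp add: rho_of_def)
qed

lemma power2_norm_mix_le_norm:
  fixes X :: "'a::euclidean_space^'n::finite"
  assumes "rows_sum_one C" "cols_sum_one C" "rho_of C \<le> 1"
  shows "(norm (mix C X))\<^sup>2 \<le> (norm X)\<^sup>2"
proof -
  have "rho_of C * (norm (dev X))\<^sup>2 \<le> (norm (dev X))\<^sup>2"
    using mult_right_mono[OF assms(3), of "(norm (dev X))\<^sup>2"] by simp
  moreover have "(norm (mix C X))\<^sup>2 = real CARD('n) * (norm (avg X))\<^sup>2 + (norm (mix C (dev X)))\<^sup>2"
    using power2_norm_avg_dev[of "mix C X"] by (simp add: assms avg_mix dev_mix)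
  ultimately show ?thesis
    using power2_norm_mix_dev_le[of C X] power2_norm_avg_dev[of X] by linarith
qed

lemma power2_norm_mix_minus_Jmat_le:
  fixes E :: "'a::euclidean_space^'n::finite"
  assumes "rows_sum_one C"
  shows "(norm (mix (C - Jmat) E))\<^sup>2 \<le> rho_of C * (norm E)\<^sup>2"
  using power2_norm_mix_dev_le[of C E] mult_left_mono[OF power2_norm_dev_le[of E] rho_of_nonneg[of C]]
  by (simp add: mix_dev[OF assms])

lemma power2_norm_mix_minus_mat_1_le:
  fixes E :: "'a::euclidean_space^'n::finite"
  assumes "rows_sum_one C" "rho_of C \<le> 1"
  shows "(norm (mix (C - mat 1) E))\<^sup>2 \<le> 4 * (norm E)\<^sup>2"
proof -
  have eq: "mix (C - mat 1) E = mix (C - Jmat) E - dev E"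
    by (simp add: dev_eq_mix mix_matrix_diff)
  have "(norm (mix (C - Jmat) E))\<^sup>2 \<le> (norm E)\<^sup>2"
    using power2_norm_mix_minus_Jmat_le[OF assms(1), of E]
      mult_right_mono[OF assms(2) zero_le_power2[of "norm E"]]
    by linarith
  then show ?thesis
    unfolding eq using power2_norm_diff_le[of "mix (C - Jmat) E" "dev E"] power2_norm_dev_le[of E]
    by linarith
qed

lemma rows_sum_one_mat_1: "rows_sum_one (mat 1)"
  by (simp add: rows_sum_one_def mat_def if_distrib cong: if_cong)

lemma cols_sum_one_mat_1: "cols_sum_one (mat 1)"
  by (simp add: cols_sum_one_def mat_def if_distrib cong: if_cong)

lemma rows_sum_one_mult:
  assumes "rows_sum_one A" "rows_sum_one B"
  shows "rows_sum_one (A ** B)"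
proof -
  have "(\<Sum>j\<in>UNIV. (A ** B)$i$j) = (\<Sum>k\<in>UNIV. A$i$k * (\<Sum>j\<in>UNIV. B$k$j))" for i
    by (simp add: matrix_matrix_mult_def sum_distrib_left) (rule sum.swap)
  with assms show ?thesis
    by (simp add: rows_sum_one_def)
qed

lemma cols_sum_one_mult:
  assumes "cols_sum_one A" "cols_sum_one B"
  shows "cols_sum_one (A ** B)"
proof -
  have "(\<Sum>i\<in>UNIV. (A ** B)$i$j) = (\<Sum>k\<in>UNIV. (\<Sum>i\<in>UNIV. A$i$k) * B$k$j)" for j
    by (simp add: matrix_matrix_mult_def sum_distrib_right) (rule sum.swap)
  with assms show ?thesis
    by (simp add: cols_sum_one_def)
qed

lemma rows_sum_one_affine:
  "rows_sum_one A \<Longrightarrow> rows_sum_one B \<Longrightarrow> rows_sum_one ((1 + e) *\<^sub>R A - e *\<^sub>R B)"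
  by (simp add: rows_sum_one_def sum_subtractf flip: sum_distrib_left)

lemma cols_sum_one_affine:
  "cols_sum_one A \<Longrightarrow> cols_sum_one B \<Longrightarrow> cols_sum_one ((1 + e) *\<^sub>R A - e *\<^sub>R B)"
  by (simp add: cols_sum_one_def sum_subtractf flip: sum_distrib_left)

lemma rows_cols_sum_one_Wbar:
  assumes "doubly_stochastic W"
  shows "rows_sum_one (Wbar acc W a) \<and> cols_sum_one (Wbar acc W a)"
proof -
  have W: "rows_sum_one W" "cols_sum_one W"
    using assms by (simp_all add: doubly_stochastic_def rows_sum_one_def cols_sum_one_def)
  have "rows_sum_one (mpow W k) \<and> cols_sum_one (mpow W k)" for k
    by (induction k) (simp_all add: W rows_sum_one_mat_1 cols_sum_one_mat_1 rows_sum_one_mult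
        cols_sum_one_mult)
  moreover have "rows_sum_one (accM eta W k) \<and> cols_sum_one (accM eta W k)" for eta k
    using W by (induction eta W k rule: accM.induct)
      (auto simp: rows_sum_one_mat_1 cols_sum_one_mat_1 rows_sum_one_mult cols_sum_one_mult
        intro!: rows_sum_one_affine cols_sum_one_affine)
  ultimately show ?thesis
    by (simp add: Wbar_def)
qed

lemma borel_measurable_vec_lambda:
  assumes "\<And>i. (\<lambda>w. f w i) \<in> borel_measurable N"
  shows "(\<lambda>w. (\<chi> i. f w i) :: 'a::euclidean_space^'n::finite) \<in> borel_measurable N"
proof (subst borel_measurable_euclidean_space, intro ballI)
  fix b :: "'a^'n"
  assume "b \<in> Basis"
  then obtain i u where "b = axis i u" "u \<in> Basis"
    by (auto simp: Basis_vec_def)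
  then show "(\<lambda>w. (\<chi> i. f w i) \<bullet> b) \<in> borel_measurable N"
    using assms[of i] by (simp add: inner_axis)
qed

lemma borel_measurable_vec_nth[measurable (raw)]:
  fixes f :: "_ \<Rightarrow> 'a::euclidean_space^'n::finite"
  assumes "f \<in> borel_measurable N"
  shows "(\<lambda>x. f x $ i) \<in> borel_measurable N"
  using borel_measurable_continuous_on[OF linear_continuous_on[OF bounded_linear_vec_nth] assms]
  by simp

lemma borel_measurable_mix[measurable (raw)]:
  fixes f :: "_ \<Rightarrow> 'a::euclidean_space^'n::finite"
  shows "f \<in> borel_measurable N \<Longrightarrow> (\<lambda>x. mix C (f x)) \<in> borel_measurable N"
  unfolding mix_def by (intro borel_measurable_vec_lambda) measurable

lemma borel_measurable_avg[measurable (raw)]: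
  fixes f :: "_ \<Rightarrow> 'a::euclidean_space^'n::finite"
  shows "f \<in> borel_measurable N \<Longrightarrow> (\<lambda>x. avg (f x)) \<in> borel_measurable N"
  unfolding avg_def by (intro borel_measurable_scaleR borel_measurable_const borel_measurable_sum
      borel_measurable_vec_nth)

lemma borel_measurable_dev[measurable (raw)]:
  fixes f :: "_ \<Rightarrow> 'a::euclidean_space^'n::finite"
  assumes "f \<in> borel_measurable N"
  shows "(\<lambda>x. dev (f x)) \<in> borel_measurable N"
  unfolding dev_def
  by (intro borel_measurable_vec_lambda borel_measurable_diff borel_measurable_vec_nth
      borel_measurable_avg assms)

definition sq_integrable ::
    "'w measure \<Rightarrow> ('w \<Rightarrow> 'b::{real_normed_vector, second_countable_topology}) \<Rightarrow> bool" where
  "sq_integrable M f \<longleftrightarrow> f \<in> borel_measurable M \<and> integrable M (\<lambda>w. (norm (f w))\<^sup>2)"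

lemma sq_integrable_bound:
  assumes "f \<in> borel_measurable M" "integrable M g" "\<And>w. (norm (f w))\<^sup>2 \<le> g w"
  shows "sq_integrable M f"
  unfolding sq_integrable_def
proof
  show "integrable M (\<lambda>w. (norm (f w))\<^sup>2)"
  proof (rule Bochner_Integration.integrable_bound[OF assms(2)])
    show "(\<lambda>w. (norm (f w))\<^sup>2) \<in> borel_measurable M"
      using assms(1) by measurable
    show "AE w in M. norm ((norm (f w))\<^sup>2) \<le> norm (g w)"
      using assms(3) by (intro AE_I2) (smt (verit) real_norm_def zero_le_power2)
  qed
qed fact

lemma sq_integrable_add:
  "sq_integrable M f \<Longrightarrow> sq_integrable M g \<Longrightarrow> sq_integrable M (\<lambda>w. f w + g w)"
  unfolding sq_integrable_def[of M f] sq_integrable_def[of M g]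
  by (intro sq_integrable_bound[where g="\<lambda>w. 2 * (norm (f w))\<^sup>2 + 2 * (norm (g w))\<^sup>2"]
      borel_measurable_add Bochner_Integration.integrable_add integrable_mult_right
      power2_norm_add_le) auto

lemma sq_integrable_diff:
  "sq_integrable M f \<Longrightarrow> sq_integrable M g \<Longrightarrow> sq_integrable M (\<lambda>w. f w - g w)"
  unfolding sq_integrable_def[of M f] sq_integrable_def[of M g]
  by (intro sq_integrable_bound[where g="\<lambda>w. 2 * (norm (f w))\<^sup>2 + 2 * (norm (g w))\<^sup>2"]
      borel_measurable_diff Bochner_Integration.integrable_add integrable_mult_right
      power2_norm_diff_le) auto

lemma sq_integrable_scaleR: "sq_integrable M f \<Longrightarrow> sq_integrable M (\<lambda>w. c *\<^sub>R f w)"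
  unfolding sq_integrable_def[of M f]
  by (intro sq_integrable_bound[where g="\<lambda>w. c\<^sup>2 * (norm (f w))\<^sup>2"] borel_measurable_scaleR
      borel_measurable_const integrable_mult_right) (auto simp: power_mult_distrib)

lemma sq_integrable_mix:
  "sq_integrable M f \<Longrightarrow> sq_integrable M (\<lambda>w. mix C (f w :: 'a::euclidean_space^'n::finite))"
  unfolding sq_integrable_def[of M f]
  by (intro sq_integrable_bound[where g="\<lambda>w. (onorm ((*v) C))\<^sup>2 * (norm (f w))\<^sup>2"]
      borel_measurable_mix integrable_mult_right power2_norm_mix_le) auto

lemma sq_integrable_dev:
  "sq_integrable M f \<Longrightarrow> sq_integrable M (\<lambda>w. dev (f w :: 'a::euclidean_space^'n::finite))"
  unfolding sq_integrable_def[of M f]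
  by (intro sq_integrable_bound[where g="\<lambda>w. (norm (f w))\<^sup>2"] borel_measurable_dev
      power2_norm_dev_le) auto

lemma sq_integrable_avg:
  "sq_integrable M f \<Longrightarrow> sq_integrable M (\<lambda>w. avg (f w :: 'a::euclidean_space^'n::finite))"
  unfolding sq_integrable_def[of M f]
proof (elim conjE, intro sq_integrable_bound[where g="\<lambda>w. (norm (f w))\<^sup>2"] borel_measurable_avg)
  fix w
  have "(norm (avg (f w)))\<^sup>2 \<le> real CARD('n) * (norm (avg (f w)))\<^sup>2"
    by (simp add: mult_le_cancel_right1)
  then show "(norm (avg (f w)))\<^sup>2 \<le> (norm (f w))\<^sup>2"
    using power2_norm_avg_dev[of "f w"] zero_le_power2[of "norm (dev (f w))"] by linarith
qed

lemma sq_integrable_imp_integrable_inner: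
  fixes f g :: "'w \<Rightarrow> 'b::{real_inner, second_countable_topology}"
  assumes "sq_integrable M f" "sq_integrable M g"
  shows "integrable M (\<lambda>w. f w \<bullet> g w)"
proof (rule Bochner_Integration.integrable_bound)
  show "integrable M (\<lambda>w. (norm (f w))\<^sup>2 + (norm (g w))\<^sup>2)"
    using assms by (simp add: sq_integrable_def)
  show "(\<lambda>w. f w \<bullet> g w) \<in> borel_measurable M"
    using assms by (auto simp: sq_integrable_def intro: borel_measurable_inner)
  have "\<bar>f w \<bullet> g w\<bar> \<le> (norm (f w))\<^sup>2 + (norm (g w))\<^sup>2" for w
    using Cauchy_Schwarz_ineq2[of "f w" "g w"] zero_le_power2[of "norm (f w) - norm (g w)"]
    by (simp add: power2_diff)
  then show "AE w in M. norm (f w \<bullet> g w) \<le> norm ((norm (f w))\<^sup>2 + (norm (g w))\<^sup>2)"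
    by simp
qed

definition mean_sq :: "'w measure \<Rightarrow> ('w \<Rightarrow> 'b::real_normed_vector) \<Rightarrow> real" where
  "mean_sq M f = (\<integral>w. (norm (f w))\<^sup>2 \<partial>M)"

lemma mean_sq_nonneg: "0 \<le> mean_sq M f"
  by (simp add: mean_sq_def)

lemma nn_integral_power2_norm_eq_mean_sq:
  "sq_integrable M f \<Longrightarrow> (\<integral>\<^sup>+w. ennreal ((norm (f w))\<^sup>2) \<partial>M) = ennreal (mean_sq M f)"
  unfolding mean_sq_def by (intro nn_integral_eq_integral) (auto simp: sq_integrable_def)

context finite_measure
begin

lemma sq_integrable_const: "sq_integrable M (\<lambda>w. c)"
  by (simp add: sq_integrable_def)

lemma sq_integrable_sum:
  "finite A \<Longrightarrow> (\<And>j. j \<in> A \<Longrightarrow> sq_integrable M (f j)) \<Longrightarrow> sq_integrable M (\<lambda>w. \<Sum>j\<in>A. f j w)"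
  by (induction A rule: finite_induct) (auto intro: sq_integrable_add sq_integrable_const)

end

section \<open>Random variables determined by the past samples\<close>

definition past_indices :: "nat \<Rightarrow> ('n \<times> nat) set" where
  "past_indices T = {p. snd p < T}"

definition past_space :: "('n \<Rightarrow> 's measure) \<Rightarrow> nat \<Rightarrow> ('n \<times> nat \<Rightarrow> 's) measure" where
  "past_space D T = PiM (past_indices T) (\<lambda>(i, t). D i)"

definition past_samples :: "('n \<Rightarrow> nat \<Rightarrow> 'w \<Rightarrow> 's) \<Rightarrow> nat \<Rightarrow> 'w \<Rightarrow> ('n \<times> nat \<Rightarrow> 's)" where
  "past_samples xi T w = restrict (\<lambda>p. case_prod xi p w) (past_indices T)"

locale indep_samples = prob_space M for M :: "'w measure" +
  fixes D :: "'n::finite \<Rightarrow> 's measure"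
    and xi :: "'n \<Rightarrow> nat \<Rightarrow> 'w \<Rightarrow> 's"
  assumes prob_space_D: "\<And>i. prob_space (D i)"
    and measurable_xi: "\<And>i t. xi i t \<in> M \<rightarrow>\<^sub>M D i"
    and distr_xi: "\<And>i t. distr M (D i) (xi i t) = D i"
    and indep_xi: "indep_vars (\<lambda>(i, t). D i) (\<lambda>(i, t). xi i t) UNIV"
begin

text \<open>Measurability with respect to the samples drawn before time \<open>T\<close>, expressed by factoring
  through these samples.\<close>

definition past_measurable :: "nat \<Rightarrow> 'b measure \<Rightarrow> ('w \<Rightarrow> 'b) \<Rightarrow> bool" where
  "past_measurable T N V \<longleftrightarrow>
     (\<exists>\<Phi> \<in> past_space D T \<rightarrow>\<^sub>M N. \<forall>w\<in>space M. V w = \<Phi> (past_samples xi T w))"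

lemma measurable_past_samples: "past_samples xi T \<in> M \<rightarrow>\<^sub>M past_space D T"
  unfolding past_samples_def past_space_def
  by (rule measurable_restrict) (auto simp: measurable_xi)

lemma past_measurable_imp_measurable:
  assumes "past_measurable T N V"
  shows "V \<in> M \<rightarrow>\<^sub>M N"
proof -
  obtain \<Phi> where \<Phi>: "\<Phi> \<in> past_space D T \<rightarrow>\<^sub>M N" and V: "\<forall>w\<in>space M. V w = \<Phi> (past_samples xi T w)"
    using assms unfolding past_measurable_def by blast
  have "(\<lambda>w. \<Phi> (past_samples xi T w)) \<in> M \<rightarrow>\<^sub>M N"
    using measurable_compose[OF measurable_past_samples \<Phi>] .
  then show ?thesis
    using V by (simp cong: measurable_cong)
qed

lemma past_measurable_const: "c \<in> space N \<Longrightarrow> past_measurable T N (\<lambda>w. c)"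
  unfolding past_measurable_def by (intro bexI[of _ "\<lambda>r. c"]) auto

lemma past_measurable_compose:
  "past_measurable T N V \<Longrightarrow> f \<in> N \<rightarrow>\<^sub>M N' \<Longrightarrow> past_measurable T N' (\<lambda>w. f (V w))"
  unfolding past_measurable_def
  by (elim bexE, rule bexI[of _ "\<lambda>r. f (_ r)"]) (auto intro: measurable_compose)

lemma past_measurable_Pair:
  assumes "past_measurable T N1 V1" "past_measurable T N2 V2"
  shows "past_measurable T (N1 \<Otimes>\<^sub>M N2) (\<lambda>w. (V1 w, V2 w))"
proof -
  obtain \<Phi>1 \<Phi>2 where "\<Phi>1 \<in> past_space D T \<rightarrow>\<^sub>M N1" "\<forall>w\<in>space M. V1 w = \<Phi>1 (past_samples xi T w)"
    "\<Phi>2 \<in> past_space D T \<rightarrow>\<^sub>M N2" "\<forall>w\<in>space M. V2 w = \<Phi>2 (past_samples xi T w)"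
    using assms unfolding past_measurable_def by blast
  then show ?thesis
    unfolding past_measurable_def by (intro bexI[of _ "\<lambda>r. (\<Phi>1 r, \<Phi>2 r)"]) auto
qed

lemma past_measurable_vec_lambda:
  assumes "\<And>i. past_measurable T borel (\<lambda>w. f w i)"
  shows "past_measurable T borel (\<lambda>w. (\<chi> i. f w i) :: 'a::euclidean_space^'n)"
proof -
  obtain \<Phi> where \<Phi>: "\<And>i. \<Phi> i \<in> borel_measurable (past_space D T)"
    and f: "\<And>i. \<forall>w\<in>space M. f w i = \<Phi> i (past_samples xi T w)"
    using assms unfolding past_measurable_def by metis
  show ?thesis
    unfolding past_measurable_def
    by (intro bexI[of _ "\<lambda>r. \<chi> i. \<Phi> i r"] borel_measurable_vec_lambda \<Phi>)
       (simp add: f fun_eq_iff)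
qed

lemma past_measurable_mono:
  assumes "T \<le> T'" "past_measurable T N V"
  shows "past_measurable T' N V"
proof -
  obtain \<Phi> where \<Phi>: "\<Phi> \<in> past_space D T \<rightarrow>\<^sub>M N" and V: "\<forall>w\<in>space M. V w = \<Phi> (past_samples xi T w)"
    using assms(2) unfolding past_measurable_def by blast
  have sub: "past_indices T \<subseteq> past_indices T'"
    using assms(1) by (auto simp: past_indices_def)
  have "(\<lambda>r. restrict r (past_indices T)) \<in> past_space D T' \<rightarrow>\<^sub>M past_space D T"
    unfolding past_space_def by (rule measurable_restrict_subset[OF sub])
  moreover have "past_samples xi T w = restrict (past_samples xi T' w) (past_indices T)" for w
    using sub by (auto simp: past_samples_def fun_eq_iff)
  ultimately show ?thesis
    unfolding past_measurable_def using V
    by (intro bexI[of _ "\<lambda>r. \<Phi> (restrict r (past_indices T))"] measurable_compose[OF _ \<Phi>]) auto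
qed

lemma past_measurable_sample:
  assumes "t < T"
  shows "past_measurable T (D i) (xi i t)"
proof -
  have "(i, t) \<in> past_indices T"
    using assms by (simp add: past_indices_def)
  then have "(\<lambda>r. r (i, t)) \<in> past_space D T \<rightarrow>\<^sub>M D i"
    unfolding past_space_def
    using measurable_component_singleton[of "(i, t)" "past_indices T" "\<lambda>(i, t). D i"] by simp
  with \<open>(i, t) \<in> past_indices T\<close> show ?thesis
    unfolding past_measurable_def by (intro bexI) (auto simp: past_samples_def)
qed

lemma past_measurable_add:
  fixes f g :: "'w \<Rightarrow> 'b::{real_normed_vector, second_countable_topology}"
  shows "past_measurable T borel f \<Longrightarrow> past_measurable T borel g \<Longrightarrow>
    past_measurable T borel (\<lambda>w. f w + g w)"
  using past_measurable_compose[OF past_measurable_Pair, of T borel f borel g "\<lambda>p. fst p + snd p"]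
  by simp

lemma past_measurable_diff:
  fixes f g :: "'w \<Rightarrow> 'b::{real_normed_vector, second_countable_topology}"
  shows "past_measurable T borel f \<Longrightarrow> past_measurable T borel g \<Longrightarrow>
    past_measurable T borel (\<lambda>w. f w - g w)"
  using past_measurable_compose[OF past_measurable_Pair, of T borel f borel g "\<lambda>p. fst p - snd p"]
  by simp

lemma past_measurable_sum:
  fixes V :: "'j \<Rightarrow> 'w \<Rightarrow> 'b::{real_normed_vector, second_countable_topology}"
  shows "finite A \<Longrightarrow> (\<And>j. j \<in> A \<Longrightarrow> past_measurable T borel (V j)) \<Longrightarrow>
    past_measurable T borel (\<lambda>w. \<Sum>j\<in>A. V j w)"
  by (induction A rule: finite_induct) (auto intro: past_measurable_const past_measurable_add)

lemma past_measurable_scaleR: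
  fixes f :: "'w \<Rightarrow> 'b::{real_normed_vector, second_countable_topology}"
  shows "past_measurable T borel f \<Longrightarrow> past_measurable T borel (\<lambda>w. c *\<^sub>R f w)"
  by (erule past_measurable_compose) simp

lemma past_measurable_mix:
  "past_measurable T borel f \<Longrightarrow> past_measurable T borel (\<lambda>w. mix C (f w :: 'a::euclidean_space^'n))"
  by (erule past_measurable_compose) (rule borel_measurable_mix[OF measurable_ident_sets[OF refl]])

lemma past_measurable_dev:
  "past_measurable T borel f \<Longrightarrow> past_measurable T borel (\<lambda>w. dev (f w :: 'a::euclidean_space^'n))"
  by (erule past_measurable_compose) (rule borel_measurable_dev[OF measurable_ident_sets[OF refl]])

lemma past_measurable_nth:
  "past_measurable T borel (z :: 'w \<Rightarrow> 'a::euclidean_space^'n) \<Longrightarrow> past_measurable T borel (\<lambda>w. z w $ i)"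
  by (erule past_measurable_compose) (rule borel_measurable_vec_nth[OF measurable_ident_sets[OF refl]])

text \<open>Independence is available only for restrictions of the whole sample family to disjoint
  index sets, so the current sample is first seen as a restriction to a singleton.\<close>

lemma distr_past_samples_sample:
  "distr M (past_space D T \<Otimes>\<^sub>M D i) (\<lambda>w. (past_samples xi T w, xi i T w))
     = distr M (past_space D T) (past_samples xi T) \<Otimes>\<^sub>M D i"
proof -
  let ?N = "PiM {(i, T)} (\<lambda>(i, t). D i)"
  let ?now = "\<lambda>w. restrict (\<lambda>p. case_prod xi p w) {(i, T)}"
  let ?eval = "\<lambda>r. r (i, T)"
  have now: "?now \<in> M \<rightarrow>\<^sub>M ?N"
    by (rule measurable_restrict) (auto simp: measurable_xi)
  have eval: "?eval \<in> ?N \<rightarrow>\<^sub>M D i"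
    using measurable_component_singleton[of "(i, T)" "{(i, T)}" "\<lambda>(i, t). D i"] by simp
  have "past_indices T \<inter> {(i, T)} = {}"
    by (simp add: past_indices_def)
  then have "indep_var (past_space D T) (past_samples xi T) ?N ?now"
    unfolding past_samples_def past_space_def by (intro indep_var_restrict[OF indep_xi]) auto
  then have indep: "distr M (past_space D T \<Otimes>\<^sub>M ?N) (\<lambda>w. (past_samples xi T w, ?now w))
      = distr M (past_space D T) (past_samples xi T) \<Otimes>\<^sub>M distr M ?N ?now"
    by (simp add: indep_var_distribution_eq)
  have "distr M (past_space D T \<Otimes>\<^sub>M D i) (\<lambda>w. (past_samples xi T w, xi i T w))
      = distr (distr M (past_space D T \<Otimes>\<^sub>M ?N) (\<lambda>w. (past_samples xi T w, ?now w)))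
          (past_space D T \<Otimes>\<^sub>M D i) (\<lambda>(a, b). (a, ?eval b))"
    using measurable_past_samples now eval by (subst distr_distr) (auto simp: comp_def)
  also have "\<dots> = distr (distr M (past_space D T) (past_samples xi T)) (past_space D T) (\<lambda>a. a)
      \<Otimes>\<^sub>M distr (distr M ?N ?now) (D i) ?eval"
    unfolding indep using eval
    by (intro pair_measure_distr[symmetric])
       (simp_all add: now distr_distr comp_def distr_xi prob_space_D prob_space_imp_sigma_finite)
  also have "\<dots> = distr M (past_space D T) (past_samples xi T) \<Otimes>\<^sub>M D i"
    using now eval measurable_past_samples by (simp add: distr_distr comp_def distr_xi)
  finally show ?thesis .
qed

lemma distr_past_measurable_sample:
  assumes "past_measurable T N V"
  shows "distr M (N \<Otimes>\<^sub>M D i) (\<lambda>w. (V w, xi i T w)) = distr M N V \<Otimes>\<^sub>M D i"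
proof -
  obtain \<Phi> where \<Phi>: "\<Phi> \<in> past_space D T \<rightarrow>\<^sub>M N" and V: "\<forall>w\<in>space M. V w = \<Phi> (past_samples xi T w)"
    using assms unfolding past_measurable_def by blast
  have pair: "(\<lambda>w. (past_samples xi T w, xi i T w)) \<in> M \<rightarrow>\<^sub>M past_space D T \<Otimes>\<^sub>M D i"
    by (intro measurable_Pair measurable_past_samples measurable_xi)
  have "distr M (N \<Otimes>\<^sub>M D i) (\<lambda>w. (V w, xi i T w))
      = distr M (N \<Otimes>\<^sub>M D i) ((\<lambda>(a, s). (\<Phi> a, s)) \<circ> (\<lambda>w. (past_samples xi T w, xi i T w)))"
    using V by (intro distr_cong) auto
  also have "\<dots> = distr (distr M (past_space D T) (past_samples xi T) \<Otimes>\<^sub>M D i) (N \<Otimes>\<^sub>M D i)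
      (\<lambda>(a, s). (\<Phi> a, s))"
    using \<Phi> by (simp add: distr_distr[OF _ pair, symmetric] distr_past_samples_sample)
  also have "\<dots> = distr (distr M (past_space D T) (past_samples xi T)) N \<Phi> \<Otimes>\<^sub>M distr (D i) (D i) (\<lambda>s. s)"
    using \<Phi> by (intro pair_measure_distr[symmetric]) (auto simp: prob_space_D prob_space_imp_sigma_finite)
  also have "distr (distr M (past_space D T) (past_samples xi T)) N \<Phi> = distr M N V"
    using V \<Phi> measurable_past_samples by (simp add: distr_distr comp_def cong: distr_cong)
  finally show ?thesis
    by simp
qed

lemma nn_integral_past_measurable_sample:
  assumes V: "past_measurable T N V" and f: "f \<in> borel_measurable (N \<Otimes>\<^sub>M D i)"
  shows "(\<integral>\<^sup>+w. f (V w, xi i T w) \<partial>M) = (\<integral>\<^sup>+w. (\<integral>\<^sup>+s. f (V w, s) \<partial>D i) \<partial>M)"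
proof -
  interpret D: prob_space "D i"
    by (rule prob_space_D)
  have Vm: "V \<in> M \<rightarrow>\<^sub>M N"
    by (rule past_measurable_imp_measurable[OF V])
  have pair: "(\<lambda>w. (V w, xi i T w)) \<in> M \<rightarrow>\<^sub>M N \<Otimes>\<^sub>M D i"
    using Vm measurable_xi by (intro measurable_Pair) auto
  have "sets (distr M N V \<Otimes>\<^sub>M D i) = sets (N \<Otimes>\<^sub>M D i)"
    by (intro sets_pair_measure_cong) auto
  then have f': "f \<in> borel_measurable (distr M N V \<Otimes>\<^sub>M D i)"
    using f by (simp cong: measurable_cong_sets)
  have "(\<integral>\<^sup>+w. f (V w, xi i T w) \<partial>M) = (\<integral>\<^sup>+p. f p \<partial>distr M (N \<Otimes>\<^sub>M D i) (\<lambda>w. (V w, xi i T w)))"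
    using f by (simp add: nn_integral_distr[OF pair])
  also have "\<dots> = (\<integral>\<^sup>+u. (\<integral>\<^sup>+s. f (u, s) \<partial>D i) \<partial>distr M N V)"
    unfolding distr_past_measurable_sample[OF V] by (rule D.nn_integral_fst[OF f', symmetric])
  also have "\<dots> = (\<integral>\<^sup>+w. (\<integral>\<^sup>+s. f (V w, s) \<partial>D i) \<partial>M)"
    using D.borel_measurable_nn_integral_fst[OF f] by (simp add: nn_integral_distr[OF Vm])
  finally show ?thesis .
qed

lemma integral_past_measurable_sample:
  fixes f :: "_ \<Rightarrow> real"
  assumes V: "past_measurable T N V" and f: "f \<in> borel_measurable (N \<Otimes>\<^sub>M D i)"
    and int: "integrable M (\<lambda>w. f (V w, xi i T w))"
  shows "(\<integral>w. f (V w, xi i T w) \<partial>M) = (\<integral>w. (\<integral>s. f (V w, s) \<partial>D i) \<partial>M)"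
proof -
  interpret D: prob_space "D i"
    by (rule prob_space_D)
  have Vm: "V \<in> M \<rightarrow>\<^sub>M N"
    by (rule past_measurable_imp_measurable[OF V])
  interpret P: pair_sigma_finite "distr M N V" "D i"
    by (intro pair_sigma_finite.intro prob_space_imp_sigma_finite prob_space_distr Vm
        D.prob_space_axioms)
  have pair: "(\<lambda>w. (V w, xi i T w)) \<in> M \<rightarrow>\<^sub>M N \<Otimes>\<^sub>M D i"
    using Vm measurable_xi by (intro measurable_Pair) auto
  have "integrable (distr M (N \<Otimes>\<^sub>M D i) (\<lambda>w. (V w, xi i T w))) f"
    using int by (simp add: integrable_distr_eq[OF pair f])
  then have int': "integrable (distr M N V \<Otimes>\<^sub>M D i) f"
    by (simp add: distr_past_measurable_sample[OF V])
  have "(\<integral>w. f (V w, xi i T w) \<partial>M) = (\<integral>p. f p \<partial>distr M (N \<Otimes>\<^sub>M D i) (\<lambda>w. (V w, xi i T w)))"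
    by (rule integral_distr[OF pair f, symmetric])
  also have "\<dots> = (\<integral>u. (\<integral>s. f (u, s) \<partial>D i) \<partial>distr M N V)"
    unfolding distr_past_measurable_sample[OF V] by (rule P.integral_fst'[OF int', symmetric])
  also have "\<dots> = (\<integral>w. (\<integral>s. f (V w, s) \<partial>D i) \<partial>M)"
    using f by (intro integral_distr[OF Vm] D.borel_measurable_lebesgue_integral) simp
  finally show ?thesis .
qed

end

section \<open>The stochastic gradient oracle\<close>

definition local_grads :: "('n::finite \<Rightarrow> 'a \<Rightarrow> 'a) \<Rightarrow> 'a^'n \<Rightarrow> 'a^'n" where
  "local_grads gr Z = (\<chi> i. gr i (Z$i))"

definition mean_grad :: "('n::finite \<Rightarrow> 'a \<Rightarrow> 'a::real_vector) \<Rightarrow> 'a \<Rightarrow> 'a" where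
  "mean_grad gr a = (1 / real CARD('n)) *\<^sub>R (\<Sum>i\<in>UNIV. gr i a)"

locale sgrad_oracle = indep_samples M D xi
  for M :: "'w measure" and D :: "'n::finite \<Rightarrow> 's measure" and xi +
  fixes G :: "'n \<Rightarrow> 'a::euclidean_space \<Rightarrow> 's \<Rightarrow> 'a"
    and grad :: "'n \<Rightarrow> 'a \<Rightarrow> 'a"
    and \<sigma> L :: real
  assumes measurable_G: "\<And>i. (\<lambda>(x, s). G i x s) \<in> borel_measurable (borel \<Otimes>\<^sub>M D i)"
    and unbiased: "\<And>i x. integrable (D i) (G i x) \<and> (\<integral>s. G i x s \<partial>D i) = grad i x"
    and variance: "\<And>i x. (\<integral>\<^sup>+s. ennreal ((norm (G i x s - grad i x))\<^sup>2) \<partial>D i) \<le> ennreal (\<sigma>\<^sup>2)"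
    and lipschitz_grad: "\<And>i x y. norm (grad i x - grad i y) \<le> L * norm (x - y)"
begin

definition noise :: "nat \<Rightarrow> 'a^'n \<Rightarrow> 'w \<Rightarrow> 'a^'n" where
  "noise t Z w = sgrad G xi w t Z - local_grads grad Z"

lemma L_nonneg: "0 \<le> L"
proof -
  obtain b :: 'a where "b \<in> Basis"
    using nonempty_Basis by blast
  then have "0 < norm b"
    by (auto simp: nonzero_Basis)
  moreover have "0 \<le> L * norm (0 - b)"
    using lipschitz_grad[of undefined 0 b] norm_ge_zero order_trans by blast
  ultimately show ?thesis
    by (simp add: zero_le_mult_iff)
qed

lemma measurable_grad[measurable]: "grad i \<in> borel_measurable borel"
  using lipschitz_grad L_nonneg
  by (intro borel_measurable_continuous_onI lipschitz_on_continuous_on[of L] lipschitz_onI)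
     (auto simp: dist_norm)

lemma measurable_G_compose:
  assumes "a \<in> N \<rightarrow>\<^sub>M borel" "b \<in> N \<rightarrow>\<^sub>M D i"
  shows "(\<lambda>x. G i (a x) (b x)) \<in> borel_measurable N"
  using measurable_compose[OF measurable_Pair[OF assms] measurable_G] by simp

lemma borel_measurable_local_grads:
  "f \<in> borel_measurable N \<Longrightarrow> (\<lambda>x. local_grads grad (f x :: 'a^'n)) \<in> borel_measurable N"
  unfolding local_grads_def
  by (intro borel_measurable_vec_lambda measurable_compose[OF borel_measurable_vec_nth measurable_grad])

lemma past_measurable_local_grads:
  "past_measurable T borel f \<Longrightarrow> past_measurable T borel (\<lambda>w. local_grads grad (f w :: 'a^'n))"
  by (erule past_measurable_compose)
     (rule borel_measurable_local_grads[OF measurable_ident_sets[OF refl]])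

lemma measurable_sgrad:
  "Z \<in> borel_measurable M \<Longrightarrow> (\<lambda>w. sgrad G xi w t (Z w :: 'a^'n)) \<in> borel_measurable M"
  unfolding sgrad_def
  by (intro borel_measurable_vec_lambda measurable_G_compose borel_measurable_vec_nth measurable_xi)

lemma past_measurable_sgrad:
  assumes "t < T" "past_measurable T borel Z"
  shows "past_measurable T borel (\<lambda>w. sgrad G xi w t (Z w :: 'a^'n))"
  unfolding sgrad_def
proof (intro past_measurable_vec_lambda)
  fix i
  have "past_measurable T (borel \<Otimes>\<^sub>M D i) (\<lambda>w. (Z w $ i, xi i t w))"
    using assms by (intro past_measurable_Pair past_measurable_sample past_measurable_nth)
  from past_measurable_compose[OF this measurable_G[of i]]
  show "past_measurable T borel (\<lambda>w. G i (Z w $ i) (xi i t w))"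
    by simp
qed

lemma power2_norm_local_grads_diff_le:
  "(norm (local_grads grad Z - local_grads grad Z'))\<^sup>2 \<le> L\<^sup>2 * (norm (Z - Z' :: 'a^'n))\<^sup>2"
proof -
  have "(norm (grad i (Z$i) - grad i (Z'$i)))\<^sup>2 \<le> L\<^sup>2 * (norm (Z$i - Z'$i))\<^sup>2" for i
    using power_mono[OF lipschitz_grad[of i "Z$i" "Z'$i"] norm_ge_zero, of 2]
    by (simp add: power_mult_distrib)
  then show ?thesis
    by (simp add: power2_norm_vec local_grads_def sum_distrib_left sum_mono)
qed

lemma sq_integrable_local_grads:
  assumes "sq_integrable M Z"
  shows "sq_integrable M (\<lambda>w. local_grads grad (Z w :: 'a^'n))"
proof -
  have "sq_integrable M (\<lambda>w. local_grads grad (Z w) - local_grads grad 0)"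
    using assms power2_norm_local_grads_diff_le[of "Z _" 0]
    by (intro sq_integrable_bound[where g="\<lambda>w. L\<^sup>2 * (norm (Z w))\<^sup>2"] borel_measurable_diff
        borel_measurable_local_grads) (auto simp: sq_integrable_def)
  from sq_integrable_add[OF this sq_integrable_const[of "local_grads grad 0"]] show ?thesis
    by simp
qed

lemma power2_norm_avg_local_grads_le:
  fixes X :: "'a^'n"
  shows "real CARD('n) * (norm (avg (local_grads grad X)))\<^sup>2
     \<le> 2 * real CARD('n) * (norm (mean_grad grad (avg X)))\<^sup>2 + 2 * L\<^sup>2 * (norm (dev X))\<^sup>2"
proof -
  let ?n = "real CARD('n)"
  let ?d = "avg (local_grads grad X) - mean_grad grad (avg X)"
  have "?d = (1 / ?n) *\<^sub>R (\<Sum>i\<in>UNIV. grad i (X$i) - grad i (avg X))"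
    by (simp add: avg_def mean_grad_def local_grads_def sum_subtractf scaleR_diff_right)
  then have "?n\<^sup>2 * (norm ?d)\<^sup>2 = (norm (\<Sum>i\<in>UNIV. grad i (X$i) - grad i (avg X)))\<^sup>2"
    by (simp add: power_mult_distrib power_divide)
  also have "\<dots> \<le> ?n * (\<Sum>i\<in>UNIV. (norm (grad i (X$i) - grad i (avg X)))\<^sup>2)"
    by (rule power2_norm_sum_le)
  also have "\<dots> \<le> ?n * (\<Sum>i\<in>UNIV. L\<^sup>2 * (norm (X$i - avg X))\<^sup>2)"
    using power_mono[OF lipschitz_grad norm_ge_zero, of _ _ _ 2]
    by (intro mult_left_mono sum_mono) (auto simp: power_mult_distrib)
  also have "\<dots> = ?n * (L\<^sup>2 * (norm (dev X))\<^sup>2)"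
    by (simp add: power2_norm_vec dev_def sum_distrib_left)
  finally have d: "?n * (norm ?d)\<^sup>2 \<le> L\<^sup>2 * (norm (dev X))\<^sup>2"
    by (simp add: power2_eq_square mult.assoc)
  have "(norm (avg (local_grads grad X)))\<^sup>2 \<le> 2 * (norm (mean_grad grad (avg X)))\<^sup>2 + 2 * (norm ?d)\<^sup>2"
    using power2_norm_add_le[of "mean_grad grad (avg X)" ?d] by simp
  then have "?n * (norm (avg (local_grads grad X)))\<^sup>2
      \<le> ?n * (2 * (norm (mean_grad grad (avg X)))\<^sup>2 + 2 * (norm ?d)\<^sup>2)"
    by (rule mult_left_mono) simp
  with d show ?thesis
    by (simp add: algebra_simps)
qed

lemma nn_integral_power2_norm_noise_le:
  assumes "past_measurable T borel z"
  shows "(\<integral>\<^sup>+w. ennreal ((norm (G i (z w) (xi i T w) - grad i (z w)))\<^sup>2) \<partial>M) \<le> ennreal (\<sigma>\<^sup>2)"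
proof -
  have "(\<lambda>p. ennreal ((norm (G i (fst p) (snd p) - grad i (fst p)))\<^sup>2)) \<in> borel_measurable (borel \<Otimes>\<^sub>M D i)"
    using measurable_G_compose[OF measurable_fst measurable_snd] by measurable
  from nn_integral_past_measurable_sample[OF assms this]
  have "(\<integral>\<^sup>+w. ennreal ((norm (G i (z w) (xi i T w) - grad i (z w)))\<^sup>2) \<partial>M)
      = (\<integral>\<^sup>+w. (\<integral>\<^sup>+s. ennreal ((norm (G i (z w) s - grad i (z w)))\<^sup>2) \<partial>D i) \<partial>M)"
    by simp
  also have "\<dots> \<le> (\<integral>\<^sup>+w. ennreal (\<sigma>\<^sup>2) \<partial>M)"
    by (intro nn_integral_mono variance)
  finally show ?thesis
    by (simp add: emeasure_space_1)
qed

lemma sq_integrable_noise_component: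
  assumes "past_measurable T borel z"
  shows "sq_integrable M (\<lambda>w. G i (z w) (xi i T w) - grad i (z w))"
  unfolding sq_integrable_def
proof
  show meas: "(\<lambda>w. G i (z w) (xi i T w) - grad i (z w)) \<in> borel_measurable M"
    using past_measurable_imp_measurable[OF assms]
    by (intro borel_measurable_diff measurable_G_compose measurable_xi
        measurable_compose[OF _ measurable_grad])
  have "(\<integral>\<^sup>+w. ennreal ((norm (G i (z w) (xi i T w) - grad i (z w)))\<^sup>2) \<partial>M) < \<top>"
    using nn_integral_power2_norm_noise_le[OF assms] by (rule order_le_less_trans) simp
  with meas show "integrable M (\<lambda>w. (norm (G i (z w) (xi i T w) - grad i (z w)))\<^sup>2)"
    by (simp add: integrable_iff_bounded)
qed

lemma integral_power2_norm_noise_component_le: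
  assumes "past_measurable T borel z"
  shows "(\<integral>w. (norm (G i (z w) (xi i T w) - grad i (z w)))\<^sup>2 \<partial>M) \<le> \<sigma>\<^sup>2"
proof -
  have int: "integrable M (\<lambda>w. (norm (G i (z w) (xi i T w) - grad i (z w)))\<^sup>2)"
    using sq_integrable_noise_component[OF assms] by (simp add: sq_integrable_def)
  have "ennreal (\<integral>w. (norm (G i (z w) (xi i T w) - grad i (z w)))\<^sup>2 \<partial>M) \<le> ennreal (\<sigma>\<^sup>2)"
    using nn_integral_power2_norm_noise_le[OF assms]
    by (subst nn_integral_eq_integral[OF int, symmetric]) auto
  then show ?thesis
    by (simp add: ennreal_le_iff)
qed

lemma
  fixes h z :: "'w \<Rightarrow> 'a"
  assumes h: "past_measurable T borel h" "sq_integrable M h" and z: "past_measurable T borel z"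
  shows integrable_inner_noise: "integrable M (\<lambda>w. h w \<bullet> (G i (z w) (xi i T w) - grad i (z w)))"
    and integral_inner_noise: "(\<integral>w. h w \<bullet> (G i (z w) (xi i T w) - grad i (z w)) \<partial>M) = 0"
proof -
  interpret D: prob_space "D i"
    by (rule prob_space_D)
  show int: "integrable M (\<lambda>w. h w \<bullet> (G i (z w) (xi i T w) - grad i (z w)))"
    by (rule sq_integrable_imp_integrable_inner[OF h(2) sq_integrable_noise_component[OF z]])
  let ?f = "\<lambda>p::('a \<times> 'a) \<times> 's. fst (fst p) \<bullet> (G i (snd (fst p)) (snd p) - grad i (snd (fst p)))"
  have f: "?f \<in> borel_measurable ((borel \<Otimes>\<^sub>M borel) \<Otimes>\<^sub>M D i)"
    using measurable_G_compose[of "\<lambda>p. snd (fst p)" _ "\<lambda>p. snd p"] by measurable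
  have "(\<integral>w. h w \<bullet> (G i (z w) (xi i T w) - grad i (z w)) \<partial>M)
      = (\<integral>w. (\<integral>s. h w \<bullet> (G i (z w) s - grad i (z w)) \<partial>D i) \<partial>M)"
    using integral_past_measurable_sample[OF past_measurable_Pair[OF h(1) z] f] int by simp
  also have "\<dots> = 0"
    using unbiased by (simp add: Bochner_Integration.integral_diff D.prob_space)
  finally show "(\<integral>w. h w \<bullet> (G i (z w) (xi i T w) - grad i (z w)) \<partial>M) = 0" .
qed

lemma power2_norm_noise:
  "(norm (noise t Z w))\<^sup>2 = (\<Sum>i\<in>UNIV. (norm (G i (Z$i) (xi i t w) - grad i (Z$i)))\<^sup>2)"
  by (simp add: noise_def power2_norm_vec sgrad_def local_grads_def)

lemma
  assumes "past_measurable T borel z"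
  shows sq_integrable_noise: "sq_integrable M (\<lambda>w. noise T (z w) w)"
    and integral_power2_norm_noise_le: "(\<integral>w. (norm (noise T (z w) w))\<^sup>2 \<partial>M) \<le> real CARD('n) * \<sigma>\<^sup>2"
proof -
  note z = past_measurable_nth[OF assms]
  have int: "integrable M (\<lambda>w. (norm (G i (z w $ i) (xi i T w) - grad i (z w $ i)))\<^sup>2)" for i
    using sq_integrable_noise_component[OF z] by (simp add: sq_integrable_def)
  show "sq_integrable M (\<lambda>w. noise T (z w) w)"
    unfolding sq_integrable_def power2_norm_noise
    using past_measurable_imp_measurable[OF assms]
    by (auto simp: noise_def intro!: borel_measurable_diff measurable_sgrad
        borel_measurable_local_grads Bochner_Integration.integrable_sum int)
  have "(\<integral>w. (norm (noise T (z w) w))\<^sup>2 \<partial>M)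
      = (\<Sum>i\<in>UNIV. (\<integral>w. (norm (G i (z w $ i) (xi i T w) - grad i (z w $ i)))\<^sup>2 \<partial>M))"
    unfolding power2_norm_noise by (intro Bochner_Integration.integral_sum int)
  also have "\<dots> \<le> (\<Sum>i\<in>(UNIV::'n set). \<sigma>\<^sup>2)"
    by (intro sum_mono integral_power2_norm_noise_component_le[OF z])
  finally show "(\<integral>w. (norm (noise T (z w) w))\<^sup>2 \<partial>M) \<le> real CARD('n) * \<sigma>\<^sup>2"
    by simp
qed

lemma
  fixes h z :: "'w \<Rightarrow> 'a^'n"
  assumes h: "past_measurable T borel h" "sq_integrable M h" and z: "past_measurable T borel z"
  shows integrable_inner_mix_noise: "integrable M (\<lambda>w. h w \<bullet> mix C (noise T (z w) w))"
    and integral_inner_mix_noise: "(\<integral>w. h w \<bullet> mix C (noise T (z w) w) \<partial>M) = 0"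
proof -
  let ?h = "\<lambda>i w. mix (transpose C) (h w) $ i"
  have "past_measurable T borel (\<lambda>w. mix (transpose C) (h w))"
    using h(1) by (rule past_measurable_mix)
  then have h_past: "past_measurable T borel (?h i)" for i
    by (rule past_measurable_nth)
  have h_sq: "sq_integrable M (?h i)" for i
    using sq_integrable_mix[OF h(2), of "transpose C"] past_measurable_imp_measurable[OF h_past]
    by (intro sq_integrable_bound[where g="\<lambda>w. (norm (mix (transpose C) (h w)))\<^sup>2"])
       (auto simp: sq_integrable_def Finite_Cartesian_Product.norm_nth_le power_mono)
  have eq: "h w \<bullet> mix C (noise T (z w) w)
      = (\<Sum>i\<in>UNIV. ?h i w \<bullet> (G i (z w $ i) (xi i T w) - grad i (z w $ i)))" for w
    by (simp add: inner_mix_transpose noise_def sgrad_def local_grads_def)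
  note z' = past_measurable_nth[OF z]
  show "integrable M (\<lambda>w. h w \<bullet> mix C (noise T (z w) w))"
    unfolding eq by (intro Bochner_Integration.integrable_sum integrable_inner_noise h_past h_sq z')
  show "(\<integral>w. h w \<bullet> mix C (noise T (z w) w) \<partial>M) = 0"
    unfolding eq
    by (simp add: Bochner_Integration.integral_sum integrable_inner_noise[OF h_past h_sq z']
        integral_inner_noise[OF h_past h_sq z'])
qed

lemma integral_power2_norm_add_mix_noise:
  fixes h z :: "'w \<Rightarrow> 'a^'n"
  assumes h: "past_measurable T borel h" "sq_integrable M h" and z: "past_measurable T borel z"
  shows "(\<integral>w. (norm (h w + mix C (noise T (z w) w)))\<^sup>2 \<partial>M)
       = (\<integral>w. (norm (h w))\<^sup>2 \<partial>M) + (\<integral>w. (norm (mix C (noise T (z w) w)))\<^sup>2 \<partial>M)"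
proof -
  let ?e = "\<lambda>w. mix C (noise T (z w) w)"
  have "(norm (h w + ?e w))\<^sup>2 = (norm (h w))\<^sup>2 + 2 * (h w \<bullet> ?e w) + (norm (?e w))\<^sup>2" for w
    by (simp add: power2_norm_eq_inner inner_add_left inner_add_right inner_commute)
  moreover have "integrable M (\<lambda>w. (norm (?e w))\<^sup>2)"
    using sq_integrable_mix[OF sq_integrable_noise[OF z]] by (simp add: sq_integrable_def)
  ultimately show ?thesis
    using h(2) integrable_inner_mix_noise[OF h z] integral_inner_mix_noise[OF h z]
    by (simp add: sq_integrable_def)
qed

lemma sq_integrable_sgrad:
  assumes "past_measurable T borel Z" "sq_integrable M Z"
  shows "sq_integrable M (\<lambda>w. sgrad G xi w T (Z w))"
  using sq_integrable_add[OF sq_integrable_noise[OF assms(1)] sq_integrable_local_grads[OF assms(2)]]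
  by (simp add: noise_def)

end

lemma snd_inner:
  "snd (inner G xi w \<gamma> \<beta> k X Y j) = Y + sgrad G xi w (\<beta> * k + j) X - sgrad G xi w (\<beta> * k) X"
proof (induction j)
  case (Suc j)
  then show ?case
    by (cases "inner G xi w \<gamma> \<beta> k X Y j") (simp add: algebra_simps)
qed simp

lemma flexgt_mult_round:
  "1 \<le> \<beta> \<Longrightarrow> flexgt Wb G xi \<gamma> \<beta> x0 (\<beta> * k) w = rounds Wb G xi \<gamma> \<beta> x0 k w"
  by (cases "rounds Wb G xi \<gamma> \<beta> x0 k w") (simp add: flexgt_def)

locale flexgt_run = sgrad_oracle M D xi G grad \<sigma> L
  for M :: "'w measure" and D :: "'n::finite \<Rightarrow> 's measure" and xi G
    and grad :: "'n \<Rightarrow> 'a::euclidean_space \<Rightarrow> 'a" and \<sigma> L :: real +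
  fixes Wb :: "real^'n^'n" and \<gamma> :: real and \<beta> :: nat and x0 :: "'a^'n"
  assumes rows_sum_one_Wb: "rows_sum_one Wb" and cols_sum_one_Wb: "cols_sum_one Wb"
    and rho_less_1: "rho_of Wb < 1"
    and beta_pos: "1 \<le> \<beta>" and gamma_nonneg: "0 \<le> \<gamma>"
    and step_size_1: "4 * \<beta> * L * \<gamma> \<le> 1"
    and step_size_2: "14 * \<beta> * L * sqrt (rho_of Wb) * \<gamma> \<le> 1 - rho_of Wb"
begin

abbreviation \<rho> where "\<rho> \<equiv> rho_of Wb"

definition x_round :: "nat \<Rightarrow> 'w \<Rightarrow> 'a^'n" where
  "x_round k w = fst (rounds Wb G xi \<gamma> \<beta> x0 k w)"

definition y_round :: "nat \<Rightarrow> 'w \<Rightarrow> 'a^'n" where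
  "y_round k w = snd (rounds Wb G xi \<gamma> \<beta> x0 k w)"

definition grad_round :: "nat \<Rightarrow> 'w \<Rightarrow> 'a^'n" where
  "grad_round k w = local_grads grad (x_round k w)"

definition v_round :: "nat \<Rightarrow> 'w \<Rightarrow> 'a^'n" where
  "v_round k w = y_round k w - noise (\<beta> * k) (x_round k w) w"

definition step_sum :: "nat \<Rightarrow> 'w \<Rightarrow> 'a^'n" where
  "step_sum k w = (\<Sum>j<\<beta>. snd (inner G xi w \<gamma> \<beta> k (x_round k w) (y_round k w) j))"

definition mixed_increment :: "nat \<Rightarrow> 'w \<Rightarrow> 'a^'n" where
  "mixed_increment k w = mix Wb (dev (v_round k w + grad_round (Suc k) w - grad_round k w))"

lemma x_round_0: "x_round 0 w = x0"
  by (simp add: x_round_def)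

lemma y_round_0: "y_round 0 w = sgrad G xi w 0 x0"
  by (simp add: y_round_def)

lemma x_round_Suc: "x_round (Suc k) w = mix Wb (x_round k w - \<gamma> *\<^sub>R step_sum k w)"
  by (cases "rounds Wb G xi \<gamma> \<beta> x0 k w") (simp add: x_round_def y_round_def step_sum_def Let_def)

lemma y_round_Suc:
  "y_round (Suc k) w = mix Wb (y_round k w + sgrad G xi w (\<beta> * Suc k) (x_round (Suc k) w)
     - sgrad G xi w (\<beta> * k) (x_round k w))"
  by (cases "rounds Wb G xi \<gamma> \<beta> x0 k w") (simp add: x_round_def y_round_def Let_def)

lemma step_sum_eq:
  "step_sum k w = (\<Sum>j<\<beta>. y_round k w + sgrad G xi w (\<beta> * k + j) (x_round k w)
     - sgrad G xi w (\<beta> * k) (x_round k w))"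
  by (simp add: step_sum_def snd_inner)

lemma step_sum_eq_noise:
  "step_sum k w = real \<beta> *\<^sub>R v_round k w + (\<Sum>j<\<beta>. noise (\<beta> * k + j) (x_round k w) w)"
proof -
  have "step_sum k w = (\<Sum>j<\<beta>. v_round k w + noise (\<beta> * k + j) (x_round k w) w)"
    unfolding step_sum_eq by (intro sum.cong) (auto simp: v_round_def noise_def)
  then show ?thesis
    by (simp add: sum.distrib sum_constant_scaleR)
qed

lemma y_round_Suc_eq_noise:
  "y_round (Suc k) w = mix Wb (v_round k w + grad_round (Suc k) w - grad_round k w
     + noise (\<beta> * Suc k) (x_round (Suc k) w) w)"
  by (simp add: y_round_Suc v_round_def grad_round_def noise_def algebra_simps)

lemma dev_y_round_Suc:
  "dev (y_round (Suc k) w)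
     = mixed_increment k w + mix (Wb - Jmat) (noise (\<beta> * Suc k) (x_round (Suc k) w) w)"
  by (simp add: y_round_Suc_eq_noise dev_mix rows_sum_one_Wb cols_sum_one_Wb dev_add mix_add
      mixed_increment_def mix_dev)

lemma dev_v_round_Suc:
  "dev (v_round (Suc k) w)
     = mixed_increment k w + mix (Wb - mat 1) (noise (\<beta> * Suc k) (x_round (Suc k) w) w)"
  by (simp add: v_round_def dev_diff dev_y_round_Suc dev_eq_mix[of "noise _ _ _"] mix_matrix_diff)

lemma dev_y_round_0:
  "dev (y_round 0 w) = dev (grad_round 0 w) + mix (mat 1 - Jmat) (noise 0 x0 w)"
  by (simp add: y_round_0 grad_round_def x_round_0 noise_def flip: dev_eq_mix dev_add)

lemma avg_y_round: "avg (y_round k w) = avg (sgrad G xi w (\<beta> * k) (x_round k w))"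
  by (induction k)
     (simp_all add: x_round_0 y_round_0 y_round_Suc avg_mix cols_sum_one_Wb avg_add avg_diff)

lemma avg_v_round: "avg (v_round k w) = avg (grad_round k w)"
  by (simp add: v_round_def avg_diff avg_y_round noise_def grad_round_def)

lemma x_round_Suc_diff:
  "x_round (Suc k) w - x_round k w
     = (mix Wb (dev (x_round k w)) - dev (x_round k w)) - \<gamma> *\<^sub>R mix Wb (step_sum k w)"
proof -
  have x: "x_round k w = vec (avg (x_round k w)) + dev (x_round k w)"
    by (simp add: dev_eq)
  have "mix Wb (x_round k w) = vec (avg (x_round k w)) + mix Wb (dev (x_round k w))"
    by (subst x) (simp add: mix_add mix_vec rows_sum_one_Wb)
  then show ?thesis
    unfolding x_round_Suc mix_diff mix_scaleR by (subst (2) x) (simp add: algebra_simps)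
qed

lemma past_measurable_sq_integrable_step_sum:
  assumes x: "past_measurable (\<beta> * k) borel (x_round k)" "sq_integrable M (x_round k)"
    and y: "past_measurable (\<beta> * k + 1) borel (y_round k)" "sq_integrable M (y_round k)"
  shows "past_measurable (\<beta> * Suc k) borel (step_sum k) \<and> sq_integrable M (step_sum k)"
proof -
  have x': "past_measurable (\<beta> * Suc k) borel (x_round k)"
    by (rule past_measurable_mono[OF _ x(1)]) simp
  have y': "past_measurable (\<beta> * Suc k) borel (y_round k)"
    using beta_pos by (intro past_measurable_mono[OF _ y(1)]) simp
  have sg_past: "past_measurable (\<beta> * Suc k) borel (\<lambda>w. sgrad G xi w (\<beta> * k + j) (x_round k w))"
    if "j < \<beta>" for j
    using that by (intro past_measurable_sgrad x') simp
  have sg_sq: "sq_integrable M (\<lambda>w. sgrad G xi w (\<beta> * k + j) (x_round k w))" for j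
    by (intro sq_integrable_sgrad past_measurable_mono[OF _ x(1)] x(2)) simp
  show ?thesis
    unfolding step_sum_eq[abs_def]
    using sg_past sg_past[of 0] sg_sq sg_sq[of 0] x' y' y(2) beta_pos
    by (auto intro!: past_measurable_sum past_measurable_add past_measurable_diff sq_integrable_sum
        sq_integrable_add sq_integrable_diff)
qed

lemma past_measurable_sq_integrable_rounds:
  "past_measurable (\<beta> * k) borel (x_round k) \<and> past_measurable (\<beta> * k + 1) borel (y_round k)
     \<and> sq_integrable M (x_round k) \<and> sq_integrable M (y_round k)"
proof (induction k)
  case 0
  have "past_measurable T borel (\<lambda>w. x0)" for T
    by (rule past_measurable_const) simp
  then show ?case
    by (simp add: x_round_0[abs_def] y_round_0[abs_def] past_measurable_sgrad sq_integrable_sgrad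
        sq_integrable_const)
next
  case (Suc k)
  then have x: "past_measurable (\<beta> * k) borel (x_round k)" "sq_integrable M (x_round k)"
    and y: "past_measurable (\<beta> * k + 1) borel (y_round k)" "sq_integrable M (y_round k)"
    by auto
  have S: "past_measurable (\<beta> * Suc k) borel (step_sum k)" "sq_integrable M (step_sum k)"
    using past_measurable_sq_integrable_step_sum[OF x y] by auto
  have x_before: "past_measurable (\<beta> * Suc k) borel (x_round k)"
    by (rule past_measurable_mono[OF _ x(1)]) simp
  have x': "past_measurable (\<beta> * Suc k) borel (x_round (Suc k))" "sq_integrable M (x_round (Suc k))"
    unfolding x_round_Suc[abs_def] using x(2) S x_before
    by (auto intro!: past_measurable_mix past_measurable_diff past_measurable_scaleR
        sq_integrable_mix sq_integrable_diff sq_integrable_scaleR)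
  have "past_measurable (\<beta> * Suc k + 1) borel (y_round (Suc k))"
    unfolding y_round_Suc[abs_def] using beta_pos
    by (intro past_measurable_mix past_measurable_diff past_measurable_add past_measurable_sgrad
        past_measurable_mono[OF _ y(1)] past_measurable_mono[OF _ x'(1)]
        past_measurable_mono[OF _ x(1)]) auto
  moreover have "sq_integrable M (y_round (Suc k))"
    unfolding y_round_Suc[abs_def]
    by (intro sq_integrable_mix sq_integrable_diff sq_integrable_add sq_integrable_sgrad x y x')
  ultimately show ?case
    using x' by simp
qed

lemma
  shows past_measurable_x_round: "past_measurable (\<beta> * k) borel (x_round k)"
    and past_measurable_y_round: "past_measurable (\<beta> * k + 1) borel (y_round k)"
    and sq_integrable_x_round: "sq_integrable M (x_round k)"
    and sq_integrable_y_round: "sq_integrable M (y_round k)"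
  using past_measurable_sq_integrable_rounds by blast+

section \<open>One round of the consensus error\<close>

lemma step_size_1_sq: "16 * (real \<beta>)\<^sup>2 * L\<^sup>2 * \<gamma>\<^sup>2 \<le> 1"
proof -
  have "(4 * \<beta> * L * \<gamma>)\<^sup>2 \<le> 1\<^sup>2"
    using step_size_1 L_nonneg gamma_nonneg by (intro power_mono) auto
  then show ?thesis
    by (simp add: power_mult_distrib)
qed

lemma step_size_2_le: "8 * \<rho> * L\<^sup>2 * \<gamma>\<^sup>2 * (real \<beta>)\<^sup>2 / (1 - \<rho>) \<le> (1 - \<rho>) / 4"
proof -
  have \<rho>: "0 \<le> \<rho>" "\<rho> < 1"
    using rho_of_nonneg rho_less_1 by auto
  then have "(14 * \<beta> * L * sqrt \<rho> * \<gamma>)\<^sup>2 \<le> (1 - \<rho>)\<^sup>2"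
    using step_size_2 L_nonneg gamma_nonneg by (intro power_mono) auto
  then have "\<rho> * L\<^sup>2 * \<gamma>\<^sup>2 * (real \<beta>)\<^sup>2 \<le> (1 - \<rho>)\<^sup>2 / 196"
    using \<rho> by (simp add: power_mult_distrib mult_ac)
  then have "8 * (\<rho> * L\<^sup>2 * \<gamma>\<^sup>2 * (real \<beta>)\<^sup>2) / (1 - \<rho>) \<le> 8 * ((1 - \<rho>)\<^sup>2 / 196) / (1 - \<rho>)"
    using \<rho> by (intro divide_right_mono mult_left_mono) auto
  also have "\<dots> = 2 * (1 - \<rho>) / 49"
    using \<rho> by (simp add: power2_eq_square field_simps)
  also have "\<dots> \<le> (1 - \<rho>) / 4"
    using \<rho> by (simp add: field_simps)
  finally show ?thesis
    by (simp add: mult.assoc)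
qed

lemma power2_norm_step_sum_le:
  "(norm (step_sum k w))\<^sup>2 \<le> 2 * (real \<beta>)\<^sup>2 * (norm (v_round k w))\<^sup>2
     + 2 * real \<beta> * (\<Sum>j<\<beta>. (norm (noise (\<beta> * k + j) (x_round k w) w))\<^sup>2)"
proof -
  have "(norm (step_sum k w))\<^sup>2 \<le> 2 * (norm (real \<beta> *\<^sub>R v_round k w))\<^sup>2
      + 2 * (norm (\<Sum>j<\<beta>. noise (\<beta> * k + j) (x_round k w) w))\<^sup>2"
    unfolding step_sum_eq_noise by (rule power2_norm_add_le)
  moreover have "(norm (\<Sum>j<\<beta>. noise (\<beta> * k + j) (x_round k w) w))\<^sup>2
      \<le> real \<beta> * (\<Sum>j<\<beta>. (norm (noise (\<beta> * k + j) (x_round k w) w))\<^sup>2)"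
    using power2_norm_sum_le[of "\<lambda>j. noise (\<beta> * k + j) (x_round k w) w" "{..<\<beta>}"] by simp
  ultimately show ?thesis
    by (simp add: power_mult_distrib)
qed

lemma power2_norm_x_round_diff_le:
  "(norm (x_round (Suc k) w - x_round k w))\<^sup>2
     \<le> 8 * (norm (dev (x_round k w)))\<^sup>2 + 2 * \<gamma>\<^sup>2 * (norm (step_sum k w))\<^sup>2"
proof -
  let ?d = "dev (x_round k w)"
  note mix_le = power2_norm_mix_le_norm[OF rows_sum_one_Wb cols_sum_one_Wb less_imp_le[OF rho_less_1]]
  have "(norm (mix Wb ?d - ?d))\<^sup>2 \<le> 4 * (norm ?d)\<^sup>2"
    using power2_norm_diff_le[of "mix Wb ?d" ?d] mix_le[of ?d] by linarith
  moreover have "(norm (\<gamma> *\<^sub>R mix Wb (step_sum k w)))\<^sup>2 \<le> \<gamma>\<^sup>2 * (norm (step_sum k w))\<^sup>2"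
    using mix_le[of "step_sum k w"] by (simp add: power_mult_distrib mult_left_mono)
  ultimately show ?thesis
    using power2_norm_diff_le[of "mix Wb ?d - ?d" "\<gamma> *\<^sub>R mix Wb (step_sum k w)"]
    unfolding x_round_Suc_diff by linarith
qed

lemma power2_norm_v_round_le:
  "(norm (v_round k w))\<^sup>2 \<le> (norm (dev (v_round k w)))\<^sup>2
     + 2 * real CARD('n) * (norm (mean_grad grad (avg (x_round k w))))\<^sup>2
     + 2 * L\<^sup>2 * (norm (dev (x_round k w)))\<^sup>2"
  using power2_norm_avg_dev[of "v_round k w"] power2_norm_avg_local_grads_le[of "x_round k w"]
  by (simp add: avg_v_round grad_round_def)

lemma power2_norm_dev_grad_increment_le:
  "(norm (dev (grad_round (Suc k) w - grad_round k w)))\<^sup>2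
     \<le> 4 * L\<^sup>2 * \<gamma>\<^sup>2 * (real \<beta>)\<^sup>2 * (norm (dev (v_round k w)))\<^sup>2
       + 17 / 2 * L\<^sup>2 * (norm (dev (x_round k w)))\<^sup>2
       + 8 * real CARD('n) * L\<^sup>2 * \<gamma>\<^sup>2 * (real \<beta>)\<^sup>2 * (norm (mean_grad grad (avg (x_round k w))))\<^sup>2
       + 4 * L\<^sup>2 * \<gamma>\<^sup>2 * real \<beta> * (\<Sum>j<\<beta>. (norm (noise (\<beta> * k + j) (x_round k w) w))\<^sup>2)"
  (is "_ \<le> 4 * L\<^sup>2 * \<gamma>\<^sup>2 * ?b\<^sup>2 * ?a + 17 / 2 * L\<^sup>2 * ?X + 8 * ?n * L\<^sup>2 * \<gamma>\<^sup>2 * ?b\<^sup>2 * ?g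
    + 4 * L\<^sup>2 * \<gamma>\<^sup>2 * ?b * ?e")
proof -
  have "(norm (dev (grad_round (Suc k) w - grad_round k w)))\<^sup>2
      \<le> (norm (grad_round (Suc k) w - grad_round k w))\<^sup>2"
    by (rule power2_norm_dev_le)
  also have "\<dots> \<le> L\<^sup>2 * (norm (x_round (Suc k) w - x_round k w))\<^sup>2"
    unfolding grad_round_def by (rule power2_norm_local_grads_diff_le)
  also have "\<dots> \<le> L\<^sup>2 * (8 * ?X + 2 * \<gamma>\<^sup>2 * (2 * ?b\<^sup>2 * (?a + 2 * ?n * ?g + 2 * L\<^sup>2 * ?X) + 2 * ?b * ?e))"
  proof -
    have "(norm (step_sum k w))\<^sup>2 \<le> 2 * ?b\<^sup>2 * (?a + 2 * ?n * ?g + 2 * L\<^sup>2 * ?X) + 2 * ?b * ?e"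
      using power2_norm_step_sum_le[of k w] mult_left_mono[OF power2_norm_v_round_le, of "2 * ?b\<^sup>2" k w]
      by simp
    then have "2 * \<gamma>\<^sup>2 * (norm (step_sum k w))\<^sup>2
        \<le> 2 * \<gamma>\<^sup>2 * (2 * ?b\<^sup>2 * (?a + 2 * ?n * ?g + 2 * L\<^sup>2 * ?X) + 2 * ?b * ?e)"
      by (rule mult_left_mono) simp
    then show ?thesis
      using power2_norm_x_round_diff_le[of k w] by (intro mult_left_mono) auto
  qed
  also have "\<dots> = 4 * L\<^sup>2 * \<gamma>\<^sup>2 * ?b\<^sup>2 * ?a + (8 + 8 * (?b\<^sup>2 * L\<^sup>2 * \<gamma>\<^sup>2)) * L\<^sup>2 * ?X
      + 8 * ?n * L\<^sup>2 * \<gamma>\<^sup>2 * ?b\<^sup>2 * ?g + 4 * L\<^sup>2 * \<gamma>\<^sup>2 * ?b * ?e"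
    by (simp add: algebra_simps power2_eq_square)
  also have "\<dots> \<le> 4 * L\<^sup>2 * \<gamma>\<^sup>2 * ?b\<^sup>2 * ?a + 17 / 2 * L\<^sup>2 * ?X
      + 8 * ?n * L\<^sup>2 * \<gamma>\<^sup>2 * ?b\<^sup>2 * ?g + 4 * L\<^sup>2 * \<gamma>\<^sup>2 * ?b * ?e"
    using step_size_1_sq by (intro add_mono order_refl mult_right_mono) auto
  finally show ?thesis .
qed

lemma power2_norm_mixed_increment_le:
  "(norm (mixed_increment k w))\<^sup>2 \<le> (3 + \<rho>) / 4 * (norm (dev (v_round k w)))\<^sup>2
     + 17 * \<rho> * L\<^sup>2 / (1 - \<rho>) * (norm (dev (x_round k w)))\<^sup>2
     + 16 * real CARD('n) * \<rho> * L\<^sup>2 * \<gamma>\<^sup>2 * (real \<beta>)\<^sup>2 / (1 - \<rho>)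
         * (norm (mean_grad grad (avg (x_round k w))))\<^sup>2
     + 8 * \<rho> * L\<^sup>2 * \<gamma>\<^sup>2 * real \<beta> / (1 - \<rho>)
         * (\<Sum>j<\<beta>. (norm (noise (\<beta> * k + j) (x_round k w) w))\<^sup>2)"
  (is "_ \<le> (3 + \<rho>) / 4 * ?a + 17 * \<rho> * L\<^sup>2 / (1 - \<rho>) * ?X + ?cg * ?g + ?ce * ?e")
proof -
  let ?q = "(norm (dev (grad_round (Suc k) w - grad_round k w)))\<^sup>2"
  let ?K = "2 * \<rho> / (1 - \<rho>)"
  have \<rho>: "0 \<le> \<rho>" "\<rho> < 1"
    using rho_of_nonneg rho_less_1 by auto
  have "(norm (mixed_increment k w))\<^sup>2
      \<le> \<rho> * (norm (dev (v_round k w + (grad_round (Suc k) w - grad_round k w))))\<^sup>2"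
    unfolding mixed_increment_def using power2_norm_mix_dev_le by (simp add: algebra_simps)
  also have "\<dots> \<le> \<rho> * (norm (dev (v_round k w)) + sqrt ?q)\<^sup>2"
    using \<rho> by (intro mult_left_mono power_mono) (auto simp: dev_add norm_triangle_ineq)
  also have "\<dots> \<le> (1 + \<rho>) / 2 * ?a + ?K * ?q"
    using contraction_power2_add_le[OF \<rho>] by simp
  also have "\<dots> \<le> (1 + \<rho>) / 2 * ?a + ?K * (4 * L\<^sup>2 * \<gamma>\<^sup>2 * (real \<beta>)\<^sup>2 * ?a
      + 17 / 2 * L\<^sup>2 * ?X + 8 * real CARD('n) * L\<^sup>2 * \<gamma>\<^sup>2 * (real \<beta>)\<^sup>2 * ?g
      + 4 * L\<^sup>2 * \<gamma>\<^sup>2 * real \<beta> * ?e)"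
    using \<rho> power2_norm_dev_grad_increment_le by (intro add_left_mono mult_left_mono) auto
  also have "\<dots> = ((1 + \<rho>) / 2 + ?K * (4 * L\<^sup>2 * \<gamma>\<^sup>2 * (real \<beta>)\<^sup>2)) * ?a
      + ?K * (17 / 2 * L\<^sup>2) * ?X + ?K * (8 * real CARD('n) * L\<^sup>2 * \<gamma>\<^sup>2 * (real \<beta>)\<^sup>2) * ?g
      + ?K * (4 * L\<^sup>2 * \<gamma>\<^sup>2 * real \<beta>) * ?e"
    by (simp add: algebra_simps)
  also have "\<dots> \<le> (3 + \<rho>) / 4 * ?a + 17 * \<rho> * L\<^sup>2 / (1 - \<rho>) * ?X + ?cg * ?g + ?ce * ?e"
  proof -
    have "?K * (4 * L\<^sup>2 * \<gamma>\<^sup>2 * (real \<beta>)\<^sup>2) \<le> (1 - \<rho>) / 4"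
      using step_size_2_le by (simp add: mult.assoc)
    then have "(1 + \<rho>) / 2 + ?K * (4 * L\<^sup>2 * \<gamma>\<^sup>2 * (real \<beta>)\<^sup>2) \<le> (1 + \<rho>) / 2 + (1 - \<rho>) / 4"
      by (rule add_left_mono)
    also have "\<dots> = (3 + \<rho>) / 4"
      by (simp add: field_simps)
    finally have "(1 + \<rho>) / 2 + ?K * (4 * L\<^sup>2 * \<gamma>\<^sup>2 * (real \<beta>)\<^sup>2) \<le> (3 + \<rho>) / 4" .
    moreover have coeffs: "?K * (17 / 2 * L\<^sup>2) = 17 * \<rho> * L\<^sup>2 / (1 - \<rho>)"
      "?K * (8 * real CARD('n) * L\<^sup>2 * \<gamma>\<^sup>2 * (real \<beta>)\<^sup>2) = ?cg"
      "?K * (4 * L\<^sup>2 * \<gamma>\<^sup>2 * real \<beta>) = ?ce"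
      using \<rho> by (simp_all add: field_simps)
    ultimately show ?thesis
      unfolding coeffs by (intro add_mono mult_right_mono order_refl) (auto intro: sum_nonneg)
  qed
  finally show ?thesis .
qed

lemma past_measurable_v_round: "past_measurable (\<beta> * k + 1) borel (v_round k)"
  unfolding v_round_def[abs_def] noise_def
  by (intro past_measurable_diff past_measurable_y_round past_measurable_sgrad
      past_measurable_local_grads past_measurable_mono[OF _ past_measurable_x_round]) auto

lemma past_measurable_mixed_increment: "past_measurable (\<beta> * Suc k) borel (mixed_increment k)"
  unfolding mixed_increment_def[abs_def] grad_round_def[abs_def] using beta_pos
  by (intro past_measurable_mix past_measurable_dev past_measurable_diff past_measurable_add
      past_measurable_local_grads past_measurable_mono[OF _ past_measurable_v_round]
      past_measurable_x_round past_measurable_mono[OF _ past_measurable_x_round]) auto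

lemma sq_integrable_v_round: "sq_integrable M (v_round k)"
  unfolding v_round_def[abs_def]
  by (intro sq_integrable_diff sq_integrable_y_round sq_integrable_noise past_measurable_x_round)

lemma sq_integrable_grad_round: "sq_integrable M (grad_round k)"
  unfolding grad_round_def[abs_def] by (intro sq_integrable_local_grads sq_integrable_x_round)

lemma sq_integrable_mixed_increment: "sq_integrable M (mixed_increment k)"
  unfolding mixed_increment_def[abs_def]
  by (intro sq_integrable_mix sq_integrable_dev sq_integrable_diff sq_integrable_add
      sq_integrable_v_round sq_integrable_grad_round)

lemma sq_integrable_mean_grad_round: "sq_integrable M (\<lambda>w. mean_grad grad (avg (x_round k w)))"
proof -
  have "mean_grad grad (avg X) = avg (local_grads grad (mix Jmat X))" for X :: "'a^'n"
    by (simp add: mean_grad_def avg_def local_grads_def mix_Jmat vec_def)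
  then show ?thesis
    using sq_integrable_avg[OF sq_integrable_local_grads[OF sq_integrable_mix[OF sq_integrable_x_round]]]
    by simp
qed

lemma integral_sum_noise_le:
  "(\<integral>w. (\<Sum>j<\<beta>. (norm (noise (\<beta> * k + j) (x_round k w) w))\<^sup>2) \<partial>M)
     \<le> real \<beta> * (real CARD('n) * \<sigma>\<^sup>2)"
proof -
  have sq: "sq_integrable M (\<lambda>w. noise (\<beta> * k + j) (x_round k w) w)" for j
    by (intro sq_integrable_noise past_measurable_mono[OF _ past_measurable_x_round]) simp
  have "(\<integral>w. (\<Sum>j<\<beta>. (norm (noise (\<beta> * k + j) (x_round k w) w))\<^sup>2) \<partial>M)
      = (\<Sum>j<\<beta>. (\<integral>w. (norm (noise (\<beta> * k + j) (x_round k w) w))\<^sup>2 \<partial>M))"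
    using sq by (intro Bochner_Integration.integral_sum) (simp add: sq_integrable_def)
  also have "\<dots> \<le> (\<Sum>j<\<beta>. real CARD('n) * \<sigma>\<^sup>2)"
    by (intro sum_mono integral_power2_norm_noise_le past_measurable_mono[OF _ past_measurable_x_round])
       simp
  finally show ?thesis
    by simp
qed

definition forcing :: "nat \<Rightarrow> real" where
  "forcing k = 17 * \<rho> * L\<^sup>2 / (1 - \<rho>) * mean_sq M (\<lambda>w. dev (x_round k w))
     + 16 * real CARD('n) * \<rho> * L\<^sup>2 * \<gamma>\<^sup>2 * (real \<beta>)\<^sup>2 / (1 - \<rho>)
         * mean_sq M (\<lambda>w. mean_grad grad (avg (x_round k w)))"

lemma forcing_nonneg: "0 \<le> forcing k"
  using rho_of_nonneg[of Wb] rho_less_1 by (simp add: forcing_def mean_sq_nonneg)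

lemma mean_sq_mixed_increment_le:
  "mean_sq M (mixed_increment k)
     \<le> (3 + \<rho>) / 4 * mean_sq M (\<lambda>w. dev (v_round k w)) + forcing k + real CARD('n) * \<sigma>\<^sup>2"
proof -
  let ?ce = "8 * \<rho> * L\<^sup>2 * \<gamma>\<^sup>2 * real \<beta> / (1 - \<rho>)"
  let ?e = "\<lambda>w. \<Sum>j<\<beta>. (norm (noise (\<beta> * k + j) (x_round k w) w))\<^sup>2"
  have \<rho>: "0 \<le> \<rho>" "\<rho> < 1"
    using rho_of_nonneg rho_less_1 by auto
  have int_e: "integrable M ?e"
    using sq_integrable_noise past_measurable_mono[OF _ past_measurable_x_round]
    by (intro Bochner_Integration.integrable_sum) (simp add: sq_integrable_def)
  have int: "integrable M (\<lambda>w. (norm (dev (v_round k w)))\<^sup>2)"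
    "integrable M (\<lambda>w. (norm (dev (x_round k w)))\<^sup>2)"
    "integrable M (\<lambda>w. (norm (mean_grad grad (avg (x_round k w))))\<^sup>2)"
    "integrable M (\<lambda>w. (norm (mixed_increment k w))\<^sup>2)"
    using sq_integrable_dev[OF sq_integrable_v_round] sq_integrable_dev[OF sq_integrable_x_round]
      sq_integrable_mean_grad_round sq_integrable_mixed_increment
    by (simp_all add: sq_integrable_def)
  have "mean_sq M (mixed_increment k) \<le> (\<integral>w. (3 + \<rho>) / 4 * (norm (dev (v_round k w)))\<^sup>2
     + 17 * \<rho> * L\<^sup>2 / (1 - \<rho>) * (norm (dev (x_round k w)))\<^sup>2
     + 16 * real CARD('n) * \<rho> * L\<^sup>2 * \<gamma>\<^sup>2 * (real \<beta>)\<^sup>2 / (1 - \<rho>)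
         * (norm (mean_grad grad (avg (x_round k w))))\<^sup>2
     + ?ce * ?e w \<partial>M)"
    unfolding mean_sq_def
    by (intro integral_mono power2_norm_mixed_increment_le Bochner_Integration.integrable_add
        integrable_mult_right int int_e)
  also have "\<dots> = (3 + \<rho>) / 4 * mean_sq M (\<lambda>w. dev (v_round k w))
     + 17 * \<rho> * L\<^sup>2 / (1 - \<rho>) * mean_sq M (\<lambda>w. dev (x_round k w))
     + 16 * real CARD('n) * \<rho> * L\<^sup>2 * \<gamma>\<^sup>2 * (real \<beta>)\<^sup>2 / (1 - \<rho>)
         * mean_sq M (\<lambda>w. mean_grad grad (avg (x_round k w)))
     + ?ce * (\<integral>w. ?e w \<partial>M)"
    using int int_e by (simp add: mean_sq_def)
  also have "?ce * (\<integral>w. ?e w \<partial>M) \<le> ?ce * (real \<beta> * (real CARD('n) * \<sigma>\<^sup>2))"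
    using \<rho> by (intro mult_left_mono integral_sum_noise_le) auto
  also have "\<dots> \<le> 1 * (real CARD('n) * \<sigma>\<^sup>2)"
  proof (subst mult.assoc[symmetric], intro mult_right_mono)
    have "?ce * real \<beta> = 8 * \<rho> * L\<^sup>2 * \<gamma>\<^sup>2 * (real \<beta>)\<^sup>2 / (1 - \<rho>)"
      by (simp add: power2_eq_square)
    also have "\<dots> \<le> (1 - \<rho>) / 4"
      by (rule step_size_2_le)
    also have "\<dots> \<le> 1"
      using \<rho> by simp
    finally show "?ce * real \<beta> \<le> 1" .
  qed simp
  finally show ?thesis
    by (simp add: forcing_def add.assoc)
qed

lemma mean_sq_mix_noise_le:
  assumes z: "past_measurable T borel z"
    and mix_le: "\<And>E :: 'a^'n. (norm (mix C E))\<^sup>2 \<le> c * (norm E)\<^sup>2" and c: "0 \<le> c"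
  shows "mean_sq M (\<lambda>w. mix C (noise T (z w) w)) \<le> c * (real CARD('n) * \<sigma>\<^sup>2)"
proof -
  have "integrable M (\<lambda>w. (norm (noise T (z w) w))\<^sup>2)"
    using sq_integrable_noise[OF z] by (simp add: sq_integrable_def)
  moreover have "integrable M (\<lambda>w. (norm (mix C (noise T (z w) w)))\<^sup>2)"
    using sq_integrable_mix[OF sq_integrable_noise[OF z]] by (simp add: sq_integrable_def)
  ultimately have "mean_sq M (\<lambda>w. mix C (noise T (z w) w)) \<le> (\<integral>w. c * (norm (noise T (z w) w))\<^sup>2 \<partial>M)"
    unfolding mean_sq_def by (intro integral_mono integrable_mult_right) (simp_all add: mix_le)
  also have "\<dots> = c * (\<integral>w. (norm (noise T (z w) w))\<^sup>2 \<partial>M)"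
    by (rule integral_mult_right_zero)
  also have "\<dots> \<le> c * (real CARD('n) * \<sigma>\<^sup>2)"
    by (intro mult_left_mono integral_power2_norm_noise_le z c)
  finally show ?thesis .
qed

lemma mean_sq_dev_y_round_Suc_le:
  "mean_sq M (\<lambda>w. dev (y_round (Suc k) w)) \<le> mean_sq M (mixed_increment k) + \<rho> * (real CARD('n) * \<sigma>\<^sup>2)"
proof -
  have "mean_sq M (\<lambda>w. dev (y_round (Suc k) w)) = mean_sq M (mixed_increment k)
      + mean_sq M (\<lambda>w. mix (Wb - Jmat) (noise (\<beta> * Suc k) (x_round (Suc k) w) w))"
    unfolding mean_sq_def dev_y_round_Suc
    by (rule integral_power2_norm_add_mix_noise[OF past_measurable_mixed_increment
          sq_integrable_mixed_increment past_measurable_x_round])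
  also have "\<dots> \<le> mean_sq M (mixed_increment k) + \<rho> * (real CARD('n) * \<sigma>\<^sup>2)"
    using power2_norm_mix_minus_Jmat_le[OF rows_sum_one_Wb] rho_of_nonneg
    by (intro add_left_mono mean_sq_mix_noise_le past_measurable_x_round)
  finally show ?thesis .
qed

lemma mean_sq_dev_v_round_Suc_le:
  "mean_sq M (\<lambda>w. dev (v_round (Suc k) w)) \<le> mean_sq M (mixed_increment k) + 4 * (real CARD('n) * \<sigma>\<^sup>2)"
proof -
  have "mean_sq M (\<lambda>w. dev (v_round (Suc k) w)) = mean_sq M (mixed_increment k)
      + mean_sq M (\<lambda>w. mix (Wb - mat 1) (noise (\<beta> * Suc k) (x_round (Suc k) w) w))"
    unfolding mean_sq_def dev_v_round_Suc
    by (rule integral_power2_norm_add_mix_noise[OF past_measurable_mixed_increment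
          sq_integrable_mixed_increment past_measurable_x_round])
  also have "\<dots> \<le> mean_sq M (mixed_increment k) + 4 * (real CARD('n) * \<sigma>\<^sup>2)"
    using power2_norm_mix_minus_mat_1_le[OF rows_sum_one_Wb less_imp_le[OF rho_less_1]]
    by (intro add_left_mono mean_sq_mix_noise_le past_measurable_x_round) auto
  finally show ?thesis .
qed

lemma mean_sq_dev_v_round_0_le:
  "mean_sq M (\<lambda>w. dev (v_round 0 w)) \<le> mean_sq M (\<lambda>w. dev (y_round 0 w))"
proof -
  have const: "past_measurable 0 borel (\<lambda>w. c)" for c :: "'a^'n"
    by (rule past_measurable_const) simp
  have "v_round 0 w = local_grads grad x0" for w
    by (simp add: v_round_def noise_def y_round_0 x_round_0)
  then have "mean_sq M (\<lambda>w. dev (y_round 0 w)) = mean_sq M (\<lambda>w. dev (v_round 0 w))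
      + mean_sq M (\<lambda>w. mix (mat 1 - Jmat) (noise 0 x0 w))"
    unfolding mean_sq_def dev_y_round_0
    using integral_power2_norm_add_mix_noise[OF const sq_integrable_const const]
    by (simp add: grad_round_def x_round_0)
  then show ?thesis
    using mean_sq_nonneg by simp
qed

end

section \<open>Summing the recursion\<close>

lemma sum_lessThan_le_shift:
  fixes a u :: "nat \<Rightarrow> 'a::ordered_comm_monoid_add"
  assumes "\<And>k. a (Suc k) \<le> u k" "0 \<le> a 0" "\<And>k. 0 \<le> u k"
  shows "(\<Sum>k<K. a k) \<le> a 0 + (\<Sum>k<K. u k)"
proof (cases K)
  case (Suc m)
  have "(\<Sum>k<K. a k) = a 0 + (\<Sum>k<m. a (Suc k))"
    unfolding Suc by (rule sum.lessThan_Suc_shift)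
  also have "\<dots> \<le> a 0 + (\<Sum>k<m. u k)"
    by (intro add_left_mono sum_mono assms(1))
  also have "\<dots> \<le> a 0 + (\<Sum>k<K. u k)"
    using assms(3) by (intro add_left_mono sum_mono2) (auto simp: Suc)
  finally show ?thesis .
qed (simp add: assms(2))

lemma coupled_contraction_sum_le:
  fixes b c r :: "nat \<Rightarrow> real"
  assumes q: "0 \<le> q" "q < 1" and start: "c 0 \<le> b 0"
    and c_Suc: "\<And>k. c (Suc k) \<le> q * c k + r k" and b_Suc: "\<And>k. b (Suc k) \<le> q * c k + r k"
    and c_nonneg: "\<And>k. 0 \<le> c k" and r_nonneg: "\<And>k. 0 \<le> r k"
  shows "(1 - q) * (\<Sum>k<K. b k) \<le> b 0 + (\<Sum>k<K. r k)"
proof -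
  have u_nonneg: "0 \<le> q * c k + r k" for k
    using q c_nonneg r_nonneg by simp
  have sum_u: "(\<Sum>k<K. q * c k + r k) = q * (\<Sum>k<K. c k) + (\<Sum>k<K. r k)"
    by (simp add: sum.distrib sum_distrib_left)
  have "(\<Sum>k<K. c k) \<le> c 0 + q * (\<Sum>k<K. c k) + (\<Sum>k<K. r k)"
    using sum_lessThan_le_shift[of c "\<lambda>k. q * c k + r k" K, OF c_Suc c_nonneg u_nonneg]
    unfolding sum_u by (simp add: add.assoc)
  then have sum_c: "(1 - q) * (\<Sum>k<K. c k) \<le> b 0 + (\<Sum>k<K. r k)"
    using start by (simp add: algebra_simps)
  have "(\<Sum>k<K. b k) \<le> b 0 + q * (\<Sum>k<K. c k) + (\<Sum>k<K. r k)"
    using sum_lessThan_le_shift[of b "\<lambda>k. q * c k + r k" K, OF b_Suc order_trans[OF c_nonneg start] u_nonneg]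
    unfolding sum_u by (simp add: add.assoc)
  then have "(1 - q) * (\<Sum>k<K. b k) \<le> (1 - q) * (b 0 + q * (\<Sum>k<K. c k) + (\<Sum>k<K. r k))"
    using q by (intro mult_left_mono) auto
  also have "\<dots> = (1 - q) * b 0 + q * ((1 - q) * (\<Sum>k<K. c k)) + (1 - q) * (\<Sum>k<K. r k)"
    by (simp add: algebra_simps)
  also have "\<dots> \<le> (1 - q) * b 0 + q * (b 0 + (\<Sum>k<K. r k)) + (1 - q) * (\<Sum>k<K. r k)"
    using sum_c q by (intro add_mono mult_left_mono order_refl) auto
  also have "\<dots> = b 0 + (\<Sum>k<K. r k)"
    by (simp add: algebra_simps)
  finally show ?thesis .
qed

lemma ennreal_average_bound:
  fixes y x g :: "nat \<Rightarrow> real" and a s d e :: real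
  assumes nonneg: "\<And>k. 0 \<le> y k" "\<And>k. 0 \<le> x k" "\<And>k. 0 \<le> g k" "0 \<le> a" "0 \<le> s" "0 \<le> d" "0 \<le> e"
    and le: "1 / K * (\<Sum>k<K. y k) \<le> a * y 0 + s + d * (1 / K * (\<Sum>k<K. x k)) + e * (1 / K * (\<Sum>k<K. g k))"
  shows "ennreal (1 / K) * (\<Sum>k<K. ennreal (y k))
    \<le> ennreal a * ennreal (y 0) + ennreal s + ennreal d * (ennreal (1 / K) * (\<Sum>k<K. ennreal (x k)))
      + ennreal e * (ennreal (1 / K) * (\<Sum>k<K. ennreal (g k)))"
proof -
  have sums: "0 \<le> (\<Sum>k<K. y k)" "0 \<le> (\<Sum>k<K. x k)" "0 \<le> (\<Sum>k<K. g k)"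
    using nonneg by (simp_all add: sum_nonneg)
  then show ?thesis
    using nonneg le
    by (simp add: ennreal_mult''[symmetric] ennreal_plus[symmetric] ennreal_leI del: ennreal_plus)
qed

context flexgt_run
begin

lemma sum_mean_sq_dev_y_round_le:
  "(1 - \<rho>) / 4 * (\<Sum>k<K. mean_sq M (\<lambda>w. dev (y_round k w)))
     \<le> mean_sq M (\<lambda>w. dev (y_round 0 w)) + (\<Sum>k<K. forcing k + 5 * (real CARD('n) * \<sigma>\<^sup>2))"
proof -
  have \<rho>: "0 \<le> \<rho>" "\<rho> < 1"
    using rho_of_nonneg rho_less_1 by auto
  have noise_nonneg: "0 \<le> real CARD('n) * \<sigma>\<^sup>2"
    by simp
  then have noise_le: "\<rho> * (real CARD('n) * \<sigma>\<^sup>2) \<le> real CARD('n) * \<sigma>\<^sup>2"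
    using mult_right_mono[OF less_imp_le[OF \<rho>(2)]] by simp
  have coeff: "(1 - \<rho>) / 4 = 1 - (3 + \<rho>) / 4"
    by (simp add: field_simps)
  show ?thesis
    unfolding coeff
  proof (rule coupled_contraction_sum_le[where c = "\<lambda>k. mean_sq M (\<lambda>w. dev (v_round k w))"])
    show "0 \<le> (3 + \<rho>) / 4" "(3 + \<rho>) / 4 < 1"
      using \<rho> by auto
    show "mean_sq M (\<lambda>w. dev (v_round 0 w)) \<le> mean_sq M (\<lambda>w. dev (y_round 0 w))"
      by (rule mean_sq_dev_v_round_0_le)
    show "mean_sq M (\<lambda>w. dev (v_round (Suc k) w))
        \<le> (3 + \<rho>) / 4 * mean_sq M (\<lambda>w. dev (v_round k w)) + (forcing k + 5 * (real CARD('n) * \<sigma>\<^sup>2))"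
      for k
      using mean_sq_dev_v_round_Suc_le[of k] mean_sq_mixed_increment_le[of k] by simp
    show "mean_sq M (\<lambda>w. dev (y_round (Suc k) w))
        \<le> (3 + \<rho>) / 4 * mean_sq M (\<lambda>w. dev (v_round k w)) + (forcing k + 5 * (real CARD('n) * \<sigma>\<^sup>2))"
      for k
      using mean_sq_dev_y_round_Suc_le[of k] mean_sq_mixed_increment_le[of k] noise_le noise_nonneg
      by linarith
    show "0 \<le> mean_sq M (\<lambda>w. dev (v_round k w))" "0 \<le> forcing k + 5 * (real CARD('n) * \<sigma>\<^sup>2)" for k
      by (simp_all add: mean_sq_nonneg forcing_nonneg)
  qed
qed

lemma avg_mean_sq_dev_y_round_le:
  assumes K: "1 \<le> K"
  shows "1 / K * (\<Sum>k<K. mean_sq M (\<lambda>w. dev (y_round k w)))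
     \<le> 4 / ((1 - \<rho>) * K) * mean_sq M (\<lambda>w. dev (y_round 0 w))
       + 24 * real CARD('n) * \<sigma>\<^sup>2 / (1 - \<rho>)
       + 96 * \<rho> * L\<^sup>2 / (1 - \<rho>)\<^sup>2 * (1 / K * (\<Sum>k<K. mean_sq M (\<lambda>w. dev (x_round k w))))
       + 384 * real CARD('n) * \<gamma>\<^sup>2 * \<beta>\<^sup>2 * L\<^sup>2 * \<rho> / (1 - \<rho>)\<^sup>2
           * (1 / K * (\<Sum>k<K. mean_sq M (\<lambda>w. mean_grad grad (avg (x_round k w)))))"
proof -
  let ?n = "real CARD('n)"
  let ?dx = "96 * \<rho> * L\<^sup>2 / (1 - \<rho>)\<^sup>2"
  let ?dg = "384 * ?n * \<gamma>\<^sup>2 * \<beta>\<^sup>2 * L\<^sup>2 * \<rho> / (1 - \<rho>)\<^sup>2"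
  let ?s = "24 * ?n * \<sigma>\<^sup>2 / (1 - \<rho>)"
  let ?X = "\<lambda>k. mean_sq M (\<lambda>w. dev (x_round k w))"
  let ?G = "\<lambda>k. mean_sq M (\<lambda>w. mean_grad grad (avg (x_round k w)))"
  have \<rho>: "0 \<le> \<rho>" "\<rho> < 1" "1 - \<rho> \<noteq> 0"
    using rho_of_nonneg rho_less_1 by auto
  have sq: "(1 - \<rho>) / 4 * (c / (1 - \<rho>)\<^sup>2) = c / 4 / (1 - \<rho>)" for c
    using \<rho> by (simp add: power2_eq_square)
  have forcing_le: "forcing k + 5 * (?n * \<sigma>\<^sup>2) \<le> (1 - \<rho>) / 4 * (?dx * ?X k + ?dg * ?G k + ?s)" for k
  proof -
    have "17 * \<rho> * L\<^sup>2 / (1 - \<rho>) \<le> 96 * \<rho> * L\<^sup>2 / 4 / (1 - \<rho>)"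
      "16 * ?n * \<rho> * L\<^sup>2 * \<gamma>\<^sup>2 * (real \<beta>)\<^sup>2 / (1 - \<rho>) \<le> 384 * ?n * \<gamma>\<^sup>2 * \<beta>\<^sup>2 * L\<^sup>2 * \<rho> / 4 / (1 - \<rho>)"
      using \<rho> by (auto intro!: divide_right_mono)
    moreover have "5 * (?n * \<sigma>\<^sup>2) \<le> (1 - \<rho>) / 4 * ?s"
      using \<rho> by simp
    ultimately show ?thesis
      unfolding forcing_def distrib_left mult.assoc[symmetric] sq
      by (intro add_mono mult_right_mono) (simp_all add: mean_sq_nonneg)
  qed
  let ?R = "?dx * (\<Sum>k<K. ?X k) + ?dg * (\<Sum>k<K. ?G k) + K * ?s"
  have "(1 - \<rho>) / 4 * (\<Sum>k<K. mean_sq M (\<lambda>w. dev (y_round k w)))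
      \<le> mean_sq M (\<lambda>w. dev (y_round 0 w)) + (\<Sum>k<K. (1 - \<rho>) / 4 * (?dx * ?X k + ?dg * ?G k + ?s))"
    using sum_mean_sq_dev_y_round_le[of K] sum_mono[of "{..<K}", OF forcing_le]
    by (meson add_left_mono order_trans)
  also have "\<dots> = mean_sq M (\<lambda>w. dev (y_round 0 w)) + (1 - \<rho>) / 4 * ?R"
    unfolding sum_distrib_left[symmetric] sum.distrib by simp
  finally have sum_le: "(1 - \<rho>) / 4 * (\<Sum>k<K. mean_sq M (\<lambda>w. dev (y_round k w)))
      \<le> mean_sq M (\<lambda>w. dev (y_round 0 w)) + (1 - \<rho>) / 4 * ?R" .
  have K_nz: "real K \<noteq> 0"
    using K by simp
  have scale: "4 / ((1 - \<rho>) * K) * ((1 - \<rho>) / 4 * r) = 1 / K * r" for r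
    using \<rho> K_nz by (simp add: field_simps)
  have "1 / K * (\<Sum>k<K. mean_sq M (\<lambda>w. dev (y_round k w)))
      = 4 / ((1 - \<rho>) * K) * ((1 - \<rho>) / 4 * (\<Sum>k<K. mean_sq M (\<lambda>w. dev (y_round k w))))"
    by (rule scale[symmetric])
  also have "\<dots> \<le> 4 / ((1 - \<rho>) * K) * (mean_sq M (\<lambda>w. dev (y_round 0 w)) + (1 - \<rho>) / 4 * ?R)"
    using sum_le \<rho> by (intro mult_left_mono) auto
  also have "\<dots> = 4 / ((1 - \<rho>) * K) * mean_sq M (\<lambda>w. dev (y_round 0 w)) + 1 / K * ?R"
    by (simp only: distrib_left scale)
  also have "1 / K * ?R = ?s + ?dx * (1 / K * (\<Sum>k<K. ?X k)) + ?dg * (1 / K * (\<Sum>k<K. ?G k))"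
    using K_nz by (simp add: distrib_left mult.commute)
  finally show ?thesis
    by (simp add: add.assoc)
qed

end

theorem lemma8:
  fixes M :: "'w measure"
    and D :: "'n::finite \<Rightarrow> 's measure"
    and xi :: "'n \<Rightarrow> nat \<Rightarrow> 'w \<Rightarrow> 's"
    and f :: "'n \<Rightarrow> 'a::euclidean_space \<Rightarrow> real"
    and grad :: "'n \<Rightarrow> 'a \<Rightarrow> 'a"
    and G :: "'n \<Rightarrow> 'a \<Rightarrow> 's \<Rightarrow> 'a"
    and W :: "real^'n^'n"
    and acc :: bool
    and \<alpha> \<beta> K :: nat
    and \<gamma> L \<sigma> :: real
    and x0 :: "'a^'n"
    and rb n :: real
  defines "Wb \<equiv> Wbar acc W \<alpha>"
  defines "rb \<equiv> rho_of (Wbar acc W \<alpha>)"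
  defines "X \<equiv> \<lambda>t w. fst (flexgt Wb G xi \<gamma> \<beta> x0 t w)"
  defines "Y \<equiv> \<lambda>t w. snd (flexgt Wb G xi \<gamma> \<beta> x0 t w)"
  defines "n \<equiv> real CARD('n)"
  assumes M: "prob_space M"
    and D: "\<And>i. prob_space (D i)"
    and xi_meas: "\<And>i t. xi i t \<in> measurable M (D i)"
    and xi_distr: "\<And>i t. distr M (D i) (xi i t) = D i"
    and xi_indep: "prob_space.indep_vars M (\<lambda>(i, t). D i) (\<lambda>(i, t). xi i t) UNIV"
    and G_meas: "\<And>i. (\<lambda>(x, s). G i x s) \<in> borel_measurable (borel \<Otimes>\<^sub>M D i)"
    and unbiased: "\<And>i x. integrable (D i) (G i x) \<and> (\<integral>s. G i x s \<partial>D i) = grad i x"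
    and variance: "\<And>i x. (\<integral>\<^sup>+s. ennreal ((norm (G i x s - grad i x))\<^sup>2) \<partial>D i) \<le> ennreal (\<sigma>\<^sup>2)"
    and grad: "\<And>i x. (f i has_derivative (\<lambda>h. grad i x \<bullet> h)) (at x)"
    and smooth: "\<And>i x y. norm (grad i x - grad i y) \<le> L * norm (x - y)"
    and W: "doubly_stochastic W" "rho_of W < 1"
    and rb: "rb < 1"
    and params: "\<alpha> \<ge> 1" "\<beta> \<ge> 1" "\<gamma> > 0"
    and step1: "4 * \<beta> * L * \<gamma> \<le> 1"
    and step2: "14 * \<beta> * L * sqrt rb * \<gamma> \<le> 1 - rb"
    and K: "K \<ge> 1"
  shows "ennreal (1 / K) * (\<Sum>k<K. \<integral>\<^sup>+w. ennreal ((norm (dev (Y (\<beta> * k) w)))\<^sup>2) \<partial>M)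
     \<le> ennreal (4 / ((1 - rb) * K)) * (\<integral>\<^sup>+w. ennreal ((norm (dev (Y 0 w)))\<^sup>2) \<partial>M)
       + ennreal (24 * n * \<sigma>\<^sup>2 / (1 - rb))
       + ennreal (96 * rb * L\<^sup>2 / (1 - rb)\<^sup>2)
           * (ennreal (1 / K) * (\<Sum>k<K. \<integral>\<^sup>+w. ennreal ((norm (dev (X (\<beta> * k) w)))\<^sup>2) \<partial>M))
       + ennreal (384 * n * \<gamma>\<^sup>2 * \<beta>\<^sup>2 * L\<^sup>2 * rb / (1 - rb)\<^sup>2)
           * (ennreal (1 / K) * (\<Sum>k<K. \<integral>\<^sup>+w.
                ennreal ((norm ((1 / n) *\<^sub>R (\<Sum>i\<in>UNIV. grad i (avg (X (\<beta> * k) w)))))\<^sup>2) \<partial>M))"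
proof -
  have Wb: "rows_sum_one Wb" "cols_sum_one Wb" "rho_of Wb = rb"
    using rows_cols_sum_one_Wbar[OF W(1)] by (simp_all add: Wb_def rb_def)
  interpret flexgt_run M D xi G grad \<sigma> L Wb \<gamma> \<beta> x0
    using M D xi_meas xi_distr xi_indep G_meas unbiased variance smooth Wb rb params step1 step2
    by (intro flexgt_run.intro sgrad_oracle.intro indep_samples.intro indep_samples_axioms.intro
        sgrad_oracle_axioms.intro flexgt_run_axioms.intro) simp_all
  have XY: "X (\<beta> * k) w = x_round k w" "Y (\<beta> * k) w = y_round k w" for k w
    unfolding X_def Y_def x_round_def y_round_def by (simp_all only: flexgt_mult_round[OF params(2)])
  note sq = sq_integrable_dev[OF sq_integrable_y_round] sq_integrable_dev[OF sq_integrable_x_round]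
    sq_integrable_mean_grad_round
  have Y0: "Y 0 w = y_round 0 w" for w
    using XY(2)[of 0] by simp
  show ?thesis
    unfolding XY Y0 n_def nn_integral_power2_norm_eq_mean_sq[OF sq(1)]
      nn_integral_power2_norm_eq_mean_sq[OF sq(2)]
      nn_integral_power2_norm_eq_mean_sq[OF sq(3)[unfolded mean_grad_def]]
    using avg_mean_sq_dev_y_round_le[OF K, unfolded Wb(3) mean_grad_def] rb rho_of_nonneg[of Wb]
    by (intro ennreal_average_bound) (simp_all add: mean_sq_nonneg Wb(3))
qed

end
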